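(* Let $w\in S_n$ with $\ell=\ell(w)$, and let $\mathbf{u}$ and $\mathbf{u}_c$ be reduced words for $w$ such that $\mathbf{u}_c$ is obtained from $\mathbf{u}$ by a single commutation. Then $\deg(\Phi_{\mathbf{u}_c}^{-1}\circ\Phi_{\mathbf{u}})=-1$.
   Context: $S_n$ is generated by $s_m=(m,m+1)$; a commutation replaces two adjacent letters $s_as_b$ with $|a-b|\geq2$ in a word by $s_bs_a$. Let $\mathbb{F}=\mathrm{Sl}_n(\mathbb{R})/P$ be the maximal real flag manifold (complete flags in $\mathbb{R}^n$), with base point $b_0$ the standard flag $\langle e_1\rangle\subset\langle e_1,e_2\rangle\subset\cdots$. For $m\in[n-1]$ let $A_m=E_{m,m+1}-E_{m+1,m}$, where $E_{k,l}$ is the matrix unit, so $e^{tA_m}$ is a rotation in the $(m,m+1)$-plane. For a reduced word $\mathbf{u}=s_{r_1}\cdots s_{r_\ell}$ of $w$, define $\Phi_{\mathbf{u}}:[0,\pi]^\ell\to\mathbb{F}$ by $\Phi_{\mathbf{u}}(t_1,\dots,t_\ell)=e^{t_1A_{r_1}}\cdots e^{t_\ell A_{r_\ell}}\cdot b_0$. This is a characteristic map of the Schubert cell of $w$: it maps the open cube diffeomorphically onto the open Bruhat cell $N\cdot wb_0$ and the boundary of the cube outside this open cell. Hence for two reduced words $\mathbf{u},\mathbf{v}$ of $w$, $\Phi_{\mathbf{v}}^{-1}\circ\Phi_{\mathbf{u}}$ induces a homeomorphism of the sphere $S^\ell=[0,\pi]^\ell/\partial[0,\pi]^\ell$, and $\deg$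 denotes its degree. *)

theory Defs
  imports "HOL-Homology.Homology" "HOL-Combinatorics.Permutations"
begin

text \<open>A word is a list of indices r, standing for s_{r_1} ... s_{r_l}, s_m = (m, m+1).
  Permutations of {1..n} are functions nat => nat permuting {1..n}.\<close>

definition sgen :: "nat \<Rightarrow> nat \<Rightarrow> nat" where
  "sgen m = Transposition.transpose m (Suc m)"

definition word_perm :: "nat list \<Rightarrow> nat \<Rightarrow> nat" where
  "word_perm u = foldr (\<lambda>r p. sgen r \<circ> p) u id"

definition is_word :: "nat \<Rightarrow> nat list \<Rightarrow> bool" where
  "is_word n u \<longleftrightarrow> (\<forall>r \<in> set u. 1 \<le> r \<and> r \<le> n - 1)"

definition perm_length :: "nat \<Rightarrow> (nat \<Rightarrow> nat) \<Rightarrow> nat" where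
  "perm_length n w = (LEAST k. \<exists>u. is_word n u \<and> length u = k \<and> word_perm u = w)"

definition reduced_word :: "nat \<Rightarrow> (nat \<Rightarrow> nat) \<Rightarrow> nat list \<Rightarrow> bool" where
  "reduced_word n w u \<longleftrightarrow> is_word n u \<and> word_perm u = w \<and> length u = perm_length n w"

definition one_commutation :: "nat list \<Rightarrow> nat list \<Rightarrow> bool" where
  "one_commutation u v \<longleftrightarrow>
     (\<exists>p q a b. 2 \<le> \<bar>int a - int b\<bar> \<and> u = p @ [a, b] @ q \<and> v = p @ [b, a] @ q)"

type_synonym rmat = "nat \<Rightarrow> nat \<Rightarrow> real"

definition mat_id :: "nat \<Rightarrow> rmat" where
  "mat_id n = (\<lambda>i j. if i \<in> {1..n} \<and> i = j then 1 else 0)"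

definition mat_mul :: "nat \<Rightarrow> rmat \<Rightarrow> rmat \<Rightarrow> rmat" where
  "mat_mul n A B = (\<lambda>i k. \<Sum>j\<in>{1..n}. A i j * B j k)"

text \<open>e^{t A_m} with A_m = E_{m,m+1} - E_{m+1,m}: the rotation by t in the (m,m+1)-plane,
  written out explicitly (exp of the 2x2 block [[0,1],[-1,0]] is [[cos t, sin t],[-sin t, cos t]]).\<close>
definition rot :: "nat \<Rightarrow> nat \<Rightarrow> real \<Rightarrow> rmat" where
  "rot n m t = (\<lambda>i j.
     if i = m \<and> j = m then cos t
     else if i = m \<and> j = Suc m then sin t
     else if i = Suc m \<and> j = m then - sin t
     else if i = Suc m \<and> j = Suc m then cos t
     else mat_id n i j)"

fun mat_prod :: "nat \<Rightarrow> rmat list \<Rightarrow> rmat" where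
  "mat_prod n [] = mat_id n"
| "mat_prod n (A # As) = mat_mul n A (mat_prod n As)"

text \<open>The flag g . b_0: its k-th subspace is spanned by the first k columns of g.\<close>
definition flag_of :: "nat \<Rightarrow> rmat \<Rightarrow> nat \<Rightarrow> (nat \<Rightarrow> real) set" where
  "flag_of n g k = (if k \<in> {1..n} then
      {v. \<exists>c. v = (\<lambda>i. if i \<in> {1..n} then \<Sum>j\<in>{1..k}. c j * g i j else 0)} else {})"

text \<open>Phi_u(t_1,...,t_l); cube coordinates are t 0, ..., t (l-1).\<close>
definition Phi :: "nat \<Rightarrow> nat list \<Rightarrow> (nat \<Rightarrow> real) \<Rightarrow> nat \<Rightarrow> (nat \<Rightarrow> real) set" where
  "Phi n u t = flag_of n (mat_prod n (map (\<lambda>i. rot n (u ! i) (t i)) [0..<length u]))"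

definition cube :: "nat \<Rightarrow> (nat \<Rightarrow> real) set" where
  "cube l = {t. (\<forall>i<l. 0 \<le> t i \<and> t i \<le> pi) \<and> (\<forall>i\<ge>l. t i = 0)}"

definition open_cube :: "nat \<Rightarrow> (nat \<Rightarrow> real) set" where
  "open_cube l = {t. (\<forall>i<l. 0 < t i \<and> t i < pi) \<and> (\<forall>i\<ge>l. t i = 0)}"

definition quotient_topology :: "'a topology \<Rightarrow> ('a \<Rightarrow> 'b) \<Rightarrow> 'b topology" where
  "quotient_topology X q =
     topology (\<lambda>U. U \<subseteq> q ` topspace X \<and> openin X {x \<in> topspace X. q x \<in> U})"

text \<open>Collapsing the boundary to the point None.\<close>
definition collapse :: "nat \<Rightarrow> (nat \<Rightarrow> real) \<Rightarrow> (nat \<Rightarrow> real) option" where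
  "collapse l t = (if t \<in> open_cube l then Some t else None)"

definition cube_sphere :: "nat \<Rightarrow> (nat \<Rightarrow> real) option topology" where
  "cube_sphere l = quotient_topology (subtopology (powertop_real UNIV) (cube l)) (collapse l)"

text \<open>The self-map of the sphere induced by Phi_v^{-1} o Phi_u.\<close>
definition transition :: "nat \<Rightarrow> nat list \<Rightarrow> nat list \<Rightarrow>
    (nat \<Rightarrow> real) option \<Rightarrow> (nat \<Rightarrow> real) option" where
  "transition n u v x = (case x of None \<Rightarrow> None
     | Some t \<Rightarrow> Some (THE s. s \<in> open_cube (length v) \<and> Phi n v s = Phi n u t))"

text \<open>Degree of a self-map of a space homeomorphic to S^l, via its action on
  reduced homology in degree l (as in Brouwer_degree2).\<close>
definition map_degree :: "nat \<Rightarrow> 'a topology \<Rightarrow> ('a \<Rightarrow> 'a) \<Rightarrow> int" where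
  "map_degree l X f =
    (SOME d::int. \<forall>x \<in> carrier (reduced_homology_group (int l) X).
        hom_induced (int l) X {} X {} f x = pow (reduced_homology_group (int l) X) x d)"

end

theory Submission
  imports Defs
begin

(* If u and u_c differ by the commutation s_a s_b -> s_b s_a at positions m, m+1,
   then |a - b| >= 2, so the two rotations act on disjoint coordinate planes and commute; hence
   Phi_{u_c} o sigma = Phi_u, where sigma exchanges the cube coordinates t_m and t_{m+1}.
   Since Phi_{u_c} is injective on the open cube, Phi_{u_c}^{-1} o Phi_u is sigma. The injectivity
   holds because, along a reduced word, the flags Phi_u(t) stay in the Bruhat cell of the
   partial product, where each angle can be read off from the flag. Finally the cube modulo its
   boundary is identified with S^l (via t -> tan (t - pi/2) and inverse stereographic projection),
   under which sigma becomes a transposition of two coordinates, a reflection of degree -1. *)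

section \<open>Reduced words and inversions\<close>

lemma sgen_apply: "sgen r x = (if x = r then Suc r else if x = Suc r then r else x)"
  by (simp add: sgen_def Transposition.transpose_def)

lemma sgen_sgen [simp]: "sgen r (sgen r x) = x"
  by (simp add: sgen_apply)

lemma sgen_permutes: "1 \<le> r \<Longrightarrow> r < n \<Longrightarrow> sgen r permutes {1..n}"
  unfolding sgen_def by (rule permutes_swap_id) auto

lemma word_perm_Nil [simp]: "word_perm [] = id"
  by (simp add: word_perm_def)

lemma word_perm_Cons [simp]: "word_perm (r # u) = sgen r \<circ> word_perm u"
  by (simp add: word_perm_def)

lemma word_perm_append: "word_perm (u @ v) = word_perm u \<circ> word_perm v"
  by (induction u) (simp_all add: comp_assoc)

lemma word_perm_snoc: "word_perm (u @ [r]) = word_perm u \<circ> sgen r"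
  by (simp add: word_perm_append)

lemma is_word_Nil [simp]: "is_word n []"
  by (simp add: is_word_def)

lemma is_word_Cons [simp]: "is_word n (r # u) \<longleftrightarrow> 1 \<le> r \<and> r < n \<and> is_word n u"
  by (auto simp: is_word_def)

lemma is_word_append [simp]: "is_word n (u @ v) \<longleftrightarrow> is_word n u \<and> is_word n v"
  by (auto simp: is_word_def)

lemma word_perm_permutes: "is_word n u \<Longrightarrow> word_perm u permutes {1..n}"
proof (induction u)
  case (Cons r u)
  then have "sgen r \<circ> word_perm u permutes {1..n}"
    by (intro permutes_compose sgen_permutes) auto
  then show ?case by (simp only: word_perm_Cons)
qed (simp add: permutes_id)

lemma permutes_neq_Suc: "w permutes {1..n} \<Longrightarrow> w r \<noteq> w (Suc r)"
  by (metis permutes_inj injD n_not_Suc_n)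

definition inversions :: "nat \<Rightarrow> (nat \<Rightarrow> nat) \<Rightarrow> (nat \<times> nat) set" where
  "inversions n w = {(i, j). i \<in> {1..n} \<and> j \<in> {1..n} \<and> i < j \<and> w j < w i}"

definition num_inversions :: "nat \<Rightarrow> (nat \<Rightarrow> nat) \<Rightarrow> nat" where
  "num_inversions n w = card (inversions n w)"

lemma finite_inversions [simp]: "finite (inversions n w)"
  by (rule finite_subset[of _ "{1..n} \<times> {1..n}"]) (auto simp: inversions_def)

lemma num_inversions_id [simp]: "num_inversions n id = 0"
proof -
  have "inversions n id = {}" by (auto simp: inversions_def)
  then show ?thesis by (simp add: num_inversions_def)
qed

lemma inversions_comp_sgen_ascent:
  assumes "1 \<le> r" "r < n" "w r < w (Suc r)"
  shows "inversions n (w \<circ> sgen r) = insert (r, Suc r) (map_prod (sgen r) (sgen r) ` inversions n w)"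
proof -
  have mono: "sgen r i < sgen r j" if "i < j" "(i, j) \<noteq> (r, Suc r)" for i j
    using that by (auto simp: sgen_apply)
  have range: "i \<in> {1..n} \<Longrightarrow> sgen r i \<in> {1..n}" for i
    using assms by (auto simp: sgen_apply)
  show ?thesis
  proof (rule Set.set_eqI, rule iffI)
    fix x assume x: "x \<in> inversions n (w \<circ> sgen r)"
    obtain i j where ij: "x = (i, j)" by force
    show "x \<in> insert (r, Suc r) (map_prod (sgen r) (sgen r) ` inversions n w)"
    proof (cases "x = (r, Suc r)")
      case False
      then have "(sgen r i, sgen r j) \<in> inversions n w"
        using x ij mono[of i j] range by (auto simp: inversions_def)
      then have "x \<in> map_prod (sgen r) (sgen r) ` inversions n w"
        by (rule rev_image_eqI) (simp add: ij)
      then show ?thesis by blast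
    qed simp
  next
    fix x assume "x \<in> insert (r, Suc r) (map_prod (sgen r) (sgen r) ` inversions n w)"
    then consider "x = (r, Suc r)" | i j where "(i, j) \<in> inversions n w" "x = (sgen r i, sgen r j)"
      by auto
    then show "x \<in> inversions n (w \<circ> sgen r)"
    proof cases
      case 2
      then have "(i, j) \<noteq> (r, Suc r)" using assms by (auto simp: inversions_def)
      with 2 show ?thesis using mono range by (auto simp: inversions_def)
    qed (use assms in \<open>auto simp: inversions_def sgen_apply\<close>)
  qed
qed

lemma num_inversions_comp_sgen_ascent:
  assumes "1 \<le> r" "r < n" "w r < w (Suc r)"
  shows "num_inversions n (w \<circ> sgen r) = Suc (num_inversions n w)"
proof -
  have "inj (sgen r)" by (rule inj_on_inverseI[where g = "sgen r"]) simp
  then have inj: "inj (map_prod (sgen r) (sgen r))" by (intro prod.inj_map)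
  have "(r, Suc r) \<notin> map_prod (sgen r) (sgen r) ` inversions n w"
    by (auto simp: inversions_def sgen_apply split: if_splits)
  then show ?thesis
    using inversions_comp_sgen_ascent[OF assms] inj
    by (simp add: num_inversions_def card_image inj_on_subset[OF inj])
qed

lemma num_inversions_comp_sgen_descent:
  assumes "1 \<le> r" "r < n" "w (Suc r) < w r"
  shows "num_inversions n w = Suc (num_inversions n (w \<circ> sgen r))"
proof -
  have "w \<circ> sgen r \<circ> sgen r = w" by (rule ext) simp
  then show ?thesis
    using num_inversions_comp_sgen_ascent[of r n "w \<circ> sgen r"] assms by (simp add: sgen_apply)
qed

lemma num_inversions_le_length: "is_word n u \<Longrightarrow> num_inversions n (word_perm u) \<le> length u"
proof (induction u rule: rev_induct)
  case (snoc r u)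
  let ?w = "word_perm u"
  have "?w r \<noteq> ?w (Suc r)"
    using snoc.prems word_perm_permutes[of n u] by (intro permutes_neq_Suc) simp
  then have "num_inversions n (word_perm (u @ [r])) \<le> Suc (num_inversions n ?w)"
    using snoc.prems num_inversions_comp_sgen_ascent[of r n ?w] num_inversions_comp_sgen_descent[of r n ?w]
    unfolding word_perm_snoc by (cases "?w r < ?w (Suc r)") auto
  then show ?case using snoc by simp
qed simp

lemma permutes_ascending_eq_id:
  assumes w: "w permutes {1..n}" and asc: "\<And>r. 1 \<le> r \<Longrightarrow> r < n \<Longrightarrow> w r < w (Suc r)"
  shows "w = id"
proof -
  have ge: "i \<le> w i" if "i \<in> {1..n}" for i
    using that
  proof (induction i)
    case (Suc i)
    then show ?case
      using asc[of i] permutes_in_image[OF w, of "Suc i"] by (cases "i = 0") force+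
  qed simp
  have "(\<Sum>i\<in>{1..n}. i) = (\<Sum>i\<in>{1..n}. w i)"
    using sum.permute[OF w, of id] by simp
  then have "i = w i" if "i \<in> {1..n}" for i
    using sum_mono_inv[of id "{1..n}" w] ge that by simp
  then show ?thesis
    using w by (intro ext) (metis id_apply permutes_not_in)
qed

lemma exists_word_num_inversions:
  "w permutes {1..n} \<Longrightarrow> \<exists>u. is_word n u \<and> length u = num_inversions n w \<and> word_perm u = w"
proof (induction "num_inversions n w" arbitrary: w)
  case 0
  have "w r < w (Suc r)" if "1 \<le> r" "r < n" for r
    using num_inversions_comp_sgen_descent[OF that] permutes_neq_Suc[OF 0(2), of r] 0(1)
    by (metis linorder_neqE_nat Zero_not_Suc)
  then have "w = id" by (rule permutes_ascending_eq_id[OF 0(2)])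
  then show ?case using 0 by (intro exI[of _ "[]"]) simp
next
  case (Suc m)
  have "w \<noteq> id" using Suc.hyps(2) by (metis num_inversions_id Zero_not_Suc)
  then obtain r where r: "1 \<le> r" "r < n" "w (Suc r) < w r"
    using permutes_ascending_eq_id[OF Suc.prems] permutes_neq_Suc[OF Suc.prems]
    by (metis linorder_neqE_nat)
  have "(w \<circ> sgen r) permutes {1..n}"
    using Suc.prems r by (intro permutes_compose sgen_permutes) auto
  moreover have "num_inversions n (w \<circ> sgen r) = m"
    using num_inversions_comp_sgen_descent[OF r] Suc.hyps(2) by simp
  ultimately obtain v where "is_word n v" "length v = m" "word_perm v = w \<circ> sgen r"
    using Suc.hyps(1) by blast
  then show ?case
    using r Suc.hyps(2) by (intro exI[of _ "v @ [r]"]) (auto simp: word_perm_snoc comp_assoc)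
qed

lemma perm_length_eq_num_inversions:
  assumes "w permutes {1..n}"
  shows "perm_length n w = num_inversions n w"
  unfolding perm_length_def
  by (rule Least_equality) (use exists_word_num_inversions[OF assms] num_inversions_le_length in auto)

lemma reduced_word_snocD:
  assumes "reduced_word n (word_perm (u @ [r])) (u @ [r])"
  shows "reduced_word n (word_perm u) u" "word_perm u r < word_perm u (Suc r)"
proof -
  let ?w = "word_perm u"
  have u: "is_word n u" "1 \<le> r" "r < n" using assms by (auto simp: reduced_word_def)
  have w: "?w permutes {1..n}" by (rule word_perm_permutes[OF u(1)])
  have "(?w \<circ> sgen r) permutes {1..n}"
    using w u by (intro permutes_compose sgen_permutes) auto
  then have len: "num_inversions n (?w \<circ> sgen r) = Suc (length u)"
    using assms by (simp add: reduced_word_def perm_length_eq_num_inversions word_perm_snoc)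
  have le: "num_inversions n ?w \<le> length u" by (rule num_inversions_le_length[OF u(1)])
  show asc: "?w r < ?w (Suc r)"
  proof (rule ccontr)
    assume "\<not> ?w r < ?w (Suc r)"
    then have "?w (Suc r) < ?w r" using permutes_neq_Suc[OF w, of r] by simp
    then show False using num_inversions_comp_sgen_descent[OF u(2,3)] len le by simp
  qed
  show "reduced_word n ?w u"
    using num_inversions_comp_sgen_ascent[OF u(2,3) asc] len u(1)
    by (simp add: reduced_word_def perm_length_eq_num_inversions[OF w])
qed

section \<open>Products of rotations\<close>

definition mat_eq_on :: "nat \<Rightarrow> rmat \<Rightarrow> rmat \<Rightarrow> bool" where
  "mat_eq_on n g h \<longleftrightarrow> (\<forall>i\<in>{1..n}. \<forall>k\<in>{1..n}. g i k = h i k)"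

lemma mat_mul_assoc: "mat_mul n (mat_mul n A B) C = mat_mul n A (mat_mul n B C)"
  unfolding mat_mul_def
  by (intro ext) (simp add: sum_distrib_left sum_distrib_right mult.assoc, rule sum.swap)

lemma mat_mul_mat_id_left: "i \<in> {1..n} \<Longrightarrow> mat_mul n (mat_id n) A i k = A i k"
  by (simp add: mat_mul_def mat_id_def if_distrib[where f = "\<lambda>x. x * _"] sum.delta cong: if_cong)

lemma mat_mul_mat_id_right: "k \<in> {1..n} \<Longrightarrow> mat_mul n A (mat_id n) i k = A i k"
  by (simp add: mat_mul_def mat_id_def if_distrib[where f = "\<lambda>x. _ * x"] sum.delta' cong: if_cong)

lemma mat_mul_cong_right:
  "mat_eq_on n B B' \<Longrightarrow> k \<in> {1..n} \<Longrightarrow> mat_mul n A B i k = mat_mul n A B' i k"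
  unfolding mat_mul_def mat_eq_on_def by (intro sum.cong) auto

lemma mat_prod_append: "mat_eq_on n (mat_prod n (As @ Bs)) (mat_mul n (mat_prod n As) (mat_prod n Bs))"
proof (induction As)
  case Nil
  then show ?case by (simp add: mat_eq_on_def mat_mul_mat_id_left)
next
  case (Cons A As)
  then show ?case by (simp add: mat_eq_on_def mat_mul_cong_right[OF Cons.IH] mat_mul_assoc)
qed

lemma rotation_sum_squares:
  fixes a b :: real
  shows "(cos \<theta> * a - sin \<theta> * b)\<^sup>2 + (sin \<theta> * a + cos \<theta> * b)\<^sup>2 = a\<^sup>2 + b\<^sup>2"
proof -
  have "(c * a - s * b)\<^sup>2 + (s * a + c * b)\<^sup>2 = (s\<^sup>2 + c\<^sup>2) * (a\<^sup>2 + b\<^sup>2)" for c s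
    by (simp add: power2_eq_square algebra_simps)
  then show ?thesis by simp
qed
lemma rotation_inverse:
  fixes a b :: real
  shows "cos \<theta> * (cos \<theta> * a - sin \<theta> * b) + sin \<theta> * (sin \<theta> * a + cos \<theta> * b) = a"
    and "cos \<theta> * (sin \<theta> * a + cos \<theta> * b) - sin \<theta> * (cos \<theta> * a - sin \<theta> * b) = b"
proof -
  have "c * (c * a - s * b) + s * (s * a + c * b) = (s\<^sup>2 + c\<^sup>2) * a"
    "c * (s * a + c * b) - s * (c * a - s * b) = (s\<^sup>2 + c\<^sup>2) * b" for c s
    by (simp_all add: power2_eq_square algebra_simps)
  then show "cos \<theta> * (cos \<theta> * a - sin \<theta> * b) + sin \<theta> * (sin \<theta> * a + cos \<theta> * b) = a"
    and "cos \<theta> * (sin \<theta> * a + cos \<theta> * b) - sin \<theta> * (cos \<theta> * a - sin \<theta> * b) = b"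
    by simp_all
qed
definition rot_cols :: "rmat \<Rightarrow> nat \<Rightarrow> real \<Rightarrow> rmat" where
  "rot_cols g r x = (\<lambda>i k.
     if k = r then cos x * g i r - sin x * g i (Suc r)
     else if k = Suc r then sin x * g i r + cos x * g i (Suc r) else g i k)"

lemma sum_two_points:
  assumes "r \<in> {1..n}" "Suc r \<in> {1..n}"
  shows "(\<Sum>j\<in>{1..n}. (f j :: real) * (if j = r then \<alpha> else if j = Suc r then \<beta> else 0))
    = f r * \<alpha> + f (Suc r) * \<beta>"
proof -
  have "(\<Sum>j\<in>{1..n}. f j * (if j = r then \<alpha> else if j = Suc r then \<beta> else 0))
      = (\<Sum>j\<in>{1..n}. (if j = r then f r * \<alpha> else 0) + (if j = Suc r then f (Suc r) * \<beta> else 0))"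
    by (intro sum.cong) auto
  then show ?thesis
    using assms by (simp add: sum.distrib)
qed

lemma mat_mul_rot:
  assumes "1 \<le> r" "r < n" "k \<in> {1..n}"
  shows "mat_mul n A (rot n r x) i k = rot_cols A r x i k"
proof -
  have r: "r \<in> {1..n}" "Suc r \<in> {1..n}" using assms by auto
  consider "k = r" | "k = Suc r" | "k \<noteq> r" "k \<noteq> Suc r" by blast
  then show ?thesis
  proof cases
    case 1
    then have "mat_mul n A (rot n r x) i k
        = (\<Sum>j\<in>{1..n}. A i j * (if j = r then cos x else if j = Suc r then - sin x else 0))"
      unfolding mat_mul_def by (intro sum.cong) (auto simp: rot_def mat_id_def)
    with 1 show ?thesis using sum_two_points[OF r, of "A i"] by (simp add: rot_cols_def)
  next
    case 2
    then have "mat_mul n A (rot n r x) i k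
        = (\<Sum>j\<in>{1..n}. A i j * (if j = r then sin x else if j = Suc r then cos x else 0))"
      unfolding mat_mul_def by (intro sum.cong) (auto simp: rot_def mat_id_def)
    with 2 show ?thesis using sum_two_points[OF r, of "A i"] by (simp add: rot_cols_def algebra_simps)
  next
    case 3
    then have "mat_mul n A (rot n r x) i k = mat_mul n A (mat_id n) i k"
      unfolding mat_mul_def by (intro sum.cong) (auto simp: rot_def mat_id_def)
    with 3 show ?thesis by (simp add: mat_mul_mat_id_right[OF assms(3)] rot_cols_def)
  qed
qed

definition rot_prod :: "nat \<Rightarrow> nat list \<Rightarrow> (nat \<Rightarrow> real) \<Rightarrow> rmat" where
  "rot_prod n u t = mat_prod n (map (\<lambda>i. rot n (u ! i) (t i)) [0..<length u])"

lemma Phi_eq_flag_of_rot_prod: "Phi n u t = flag_of n (rot_prod n u t)"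
  by (simp add: Phi_def rot_prod_def)

lemma rot_prod_Nil: "i \<in> {1..n} \<Longrightarrow> k \<in> {1..n} \<Longrightarrow> rot_prod n [] t i k = (if i = k then 1 else 0)"
  by (simp add: rot_prod_def mat_id_def)

lemma rot_prod_snoc:
  assumes "1 \<le> r" "r < n"
  shows "mat_eq_on n (rot_prod n (u @ [r]) t) (rot_cols (rot_prod n u t) r (t (length u)))"
  unfolding mat_eq_on_def
proof (intro ballI)
  fix i k assume k: "i \<in> {1..n}" "k \<in> {1..n}"
  let ?R = "rot n r (t (length u))"
  have "map (\<lambda>i. rot n ((u @ [r]) ! i) (t i)) [0..<length (u @ [r])]
      = map (\<lambda>i. rot n (u ! i) (t i)) [0..<length u] @ [?R]"
    by (simp add: nth_append)
  then have "rot_prod n (u @ [r]) t = mat_prod n (map (\<lambda>i. rot n (u ! i) (t i)) [0..<length u] @ [?R])"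
    by (simp only: rot_prod_def)
  then have "rot_prod n (u @ [r]) t i k = mat_mul n (rot_prod n u t) (mat_prod n [?R]) i k"
    using mat_prod_append k by (simp add: mat_eq_on_def rot_prod_def)
  also have "\<dots> = mat_mul n (rot_prod n u t) ?R i k"
    by (rule mat_mul_cong_right[OF _ k(2)]) (simp add: mat_eq_on_def mat_mul_mat_id_right)
  also have "\<dots> = rot_cols (rot_prod n u t) r (t (length u)) i k"
    by (rule mat_mul_rot[OF assms k(2)])
  finally show "rot_prod n (u @ [r]) t i k = rot_cols (rot_prod n u t) r (t (length u)) i k" .
qed

lemma rot_prod_cong: "(\<And>i. i < length u \<Longrightarrow> t i = s i) \<Longrightarrow> rot_prod n u t = rot_prod n u s"
  unfolding rot_prod_def by (intro arg_cong[where f = "mat_prod n"] map_cong) auto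

lemma rot_cols_cong:
  "mat_eq_on n g h \<Longrightarrow> 1 \<le> r \<Longrightarrow> r < n \<Longrightarrow> mat_eq_on n (rot_cols g r x) (rot_cols h r x)"
  unfolding mat_eq_on_def rot_cols_def by auto

lemma rot_cols_commute:
  "2 \<le> \<bar>int a - int b\<bar> \<Longrightarrow> rot_cols (rot_cols g a x) b y = rot_cols (rot_cols g b y) a x"
  unfolding rot_cols_def by (intro ext) auto

definition swap_coords :: "nat \<Rightarrow> nat \<Rightarrow> (nat \<Rightarrow> real) \<Rightarrow> nat \<Rightarrow> real" where
  "swap_coords i j x = x \<circ> Transposition.transpose i j"

lemma swap_coords_apply:
  "swap_coords i j x k = (if k = i then x j else if k = j then x i else x k)"
  by (simp add: swap_coords_def Transposition.transpose_def)

lemma rot_prod_commutation: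
  assumes "is_word n (p @ [a, b] @ q)" "2 \<le> \<bar>int a - int b\<bar>"
  shows "mat_eq_on n (rot_prod n (p @ [a, b] @ q) t)
           (rot_prod n (p @ [b, a] @ q) (swap_coords (length p) (Suc (length p)) t))"
  using assms(1)
proof (induction q rule: rev_induct)
  case Nil
  let ?s = "swap_coords (length p) (Suc (length p)) t"
  have ab: "1 \<le> a" "a < n" "1 \<le> b" "b < n" using Nil by auto
  have "rot_prod n p ?s = rot_prod n p t"
    by (rule rot_prod_cong) (simp add: swap_coords_apply)
  then have "mat_eq_on n (rot_prod n (p @ [b, a]) ?s)
      (rot_cols (rot_cols (rot_prod n p t) b (t (Suc (length p)))) a (t (length p)))"
    using rot_prod_snoc[OF ab(1,2), of "p @ [b]" ?s] rot_cols_cong[OF rot_prod_snoc[OF ab(3,4), of p ?s] ab(1,2)]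
    by (simp add: mat_eq_on_def swap_coords_apply)
  moreover have "mat_eq_on n (rot_prod n (p @ [a, b]) t)
      (rot_cols (rot_cols (rot_prod n p t) a (t (length p))) b (t (Suc (length p))))"
    using rot_prod_snoc[OF ab(3,4), of "p @ [a]" t] rot_cols_cong[OF rot_prod_snoc[OF ab(1,2), of p t] ab(3,4)]
    by (simp add: mat_eq_on_def)
  ultimately show ?case
    using rot_cols_commute[OF assms(2)] by (simp add: mat_eq_on_def)
next
  case (snoc c q)
  let ?v = "p @ [a, b] @ q" and ?v' = "p @ [b, a] @ q"
  let ?s = "swap_coords (length p) (Suc (length p)) t"
  have c: "1 \<le> c" "c < n" using snoc by auto
  have "?s (length ?v') = t (length ?v)"
    by (simp add: swap_coords_apply)
  then have "mat_eq_on n (rot_prod n (?v' @ [c]) ?s) (rot_cols (rot_prod n ?v' ?s) c (t (length ?v)))"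
    using rot_prod_snoc[OF c, of ?v' ?s] by simp
  moreover have "mat_eq_on n (rot_prod n ?v t) (rot_prod n ?v' ?s)"
    using snoc by simp
  note rot_cols_cong[OF this c]
  ultimately show ?case
    using rot_prod_snoc[OF c, of ?v t] by (simp add: mat_eq_on_def)
qed

section \<open>Spans of columns and flags\<close>

definition col :: "rmat \<Rightarrow> nat \<Rightarrow> nat \<Rightarrow> real" where
  "col g = (\<lambda>m i. g i m)"

definition in_span :: "nat \<Rightarrow> (nat \<Rightarrow> nat \<Rightarrow> real) \<Rightarrow> nat \<Rightarrow> (nat \<Rightarrow> real) \<Rightarrow> bool" where
  "in_span n h k x \<longleftrightarrow> (\<exists>c. \<forall>i\<in>{1..n}. x i = (\<Sum>m\<in>{1..k}. c m * h m i))"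

lemma in_span_lincomb:
  assumes "in_span n h k x" "in_span n h k y" "\<And>i. i \<in> {1..n} \<Longrightarrow> z i = a * x i + b * y i"
  shows "in_span n h k z"
proof -
  obtain c where c: "\<forall>i\<in>{1..n}. x i = (\<Sum>m\<in>{1..k}. c m * h m i)"
    using assms(1) in_span_def by blast
  obtain d where d: "\<forall>i\<in>{1..n}. y i = (\<Sum>m\<in>{1..k}. d m * h m i)"
    using assms(2) in_span_def by blast
  show ?thesis unfolding in_span_def
    by (rule exI[of _ "\<lambda>m. a * c m + b * d m"])
       (simp add: assms(3) c d sum_distrib_left sum.distrib algebra_simps)
qed

lemma in_span_cong: "(\<And>i. i \<in> {1..n} \<Longrightarrow> x i = y i) \<Longrightarrow> in_span n h k x \<longleftrightarrow> in_span n h k y"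
  unfolding in_span_def by auto

lemma in_span_gen_cong:
  assumes "\<And>m i. m \<in> {1..k} \<Longrightarrow> i \<in> {1..n} \<Longrightarrow> h m i = h' m i"
  shows "in_span n h k = in_span n h' k"
proof -
  have "(\<Sum>m\<in>{1..k}. c m * h m i) = (\<Sum>m\<in>{1..k}. c m * h' m i)" if "i \<in> {1..n}" for c i
    using assms that by (intro sum.cong) auto
  then show ?thesis
    unfolding in_span_def by auto
qed

lemma in_span_gen: "j \<in> {1..k} \<Longrightarrow> in_span n h k (h j)"
  unfolding in_span_def
  by (rule exI[of _ "\<lambda>m. if m = j then 1 else 0"])
     (simp add: if_distrib[where f = "\<lambda>x. x * _"] sum.delta cong: if_cong)

lemma in_span_mono:
  assumes "in_span n h k x" "k \<le> k'"
  shows "in_span n h k' x"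
proof -
  obtain c where c: "\<forall>i\<in>{1..n}. x i = (\<Sum>m\<in>{1..k}. c m * h m i)"
    using assms(1) in_span_def by blast
  have "(\<Sum>m\<in>{1..k'}. (if m \<le> k then c m else 0) * h m i) = (\<Sum>m\<in>{1..k}. c m * h m i)" for i
    by (rule sum.mono_neutral_cong_right) (use assms(2) in auto)
  then show ?thesis
    unfolding in_span_def using c by (intro exI[of _ "\<lambda>m. if m \<le> k then c m else 0"]) auto
qed

lemma in_span_trans:
  assumes "\<And>j. j \<in> {1..k} \<Longrightarrow> in_span n h k' (f j)" "in_span n f k x"
  shows "in_span n h k' x"
proof -
  obtain c where c: "\<forall>i\<in>{1..n}. x i = (\<Sum>j\<in>{1..k}. c j * f j i)"
    using assms(2) in_span_def by blast
  have "\<forall>j\<in>{1..k}. \<exists>d. \<forall>i\<in>{1..n}. f j i = (\<Sum>m\<in>{1..k'}. d m * h m i)"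
    using assms(1) by (auto simp: in_span_def)
  then obtain D where D: "\<And>j i. j \<in> {1..k} \<Longrightarrow> i \<in> {1..n} \<Longrightarrow> f j i = (\<Sum>m\<in>{1..k'}. D j m * h m i)"
    by metis
  show ?thesis unfolding in_span_def
  proof (intro exI[of _ "\<lambda>m. \<Sum>j\<in>{1..k}. c j * D j m"] ballI)
    fix i assume i: "i \<in> {1..n}"
    have "x i = (\<Sum>j\<in>{1..k}. c j * (\<Sum>m\<in>{1..k'}. D j m * h m i))"
      using c i D by (auto intro!: sum.cong)
    also have "\<dots> = (\<Sum>m\<in>{1..k'}. (\<Sum>j\<in>{1..k}. c j * D j m) * h m i)"
      by (simp add: sum_distrib_left sum_distrib_right mult.assoc, rule sum.swap)
    finally show "x i = (\<Sum>m\<in>{1..k'}. (\<Sum>j\<in>{1..k}. c j * D j m) * h m i)" .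
  qed
qed

lemma in_span_eqI:
  assumes "\<And>j. j \<in> {1..k} \<Longrightarrow> in_span n h k (f j)" "\<And>j. j \<in> {1..k} \<Longrightarrow> in_span n f k (h j)"
  shows "in_span n f k = in_span n h k"
  using in_span_trans assms by blast

lemma in_span_0: "in_span n h 0 x \<longleftrightarrow> (\<forall>i\<in>{1..n}. x i = 0)"
  unfolding in_span_def by simp

lemma in_span_Suc:
  "in_span n h (Suc k) x \<longleftrightarrow> (\<exists>y a. in_span n h k y \<and> (\<forall>i\<in>{1..n}. x i = y i + a * h (Suc k) i))"
proof
  assume "in_span n h (Suc k) x"
  then obtain c where c: "\<forall>i\<in>{1..n}. x i = (\<Sum>m\<in>{1..Suc k}. c m * h m i)"
    using in_span_def by blast
  have "in_span n h k (\<lambda>i. \<Sum>m\<in>{1..k}. c m * h m i)"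
    unfolding in_span_def by blast
  with c show "\<exists>y a. in_span n h k y \<and> (\<forall>i\<in>{1..n}. x i = y i + a * h (Suc k) i)"
    by auto
next
  assume "\<exists>y a. in_span n h k y \<and> (\<forall>i\<in>{1..n}. x i = y i + a * h (Suc k) i)"
  then obtain y a c where "\<forall>i\<in>{1..n}. x i = y i + a * h (Suc k) i"
    "\<forall>i\<in>{1..n}. y i = (\<Sum>m\<in>{1..k}. c m * h m i)"
    unfolding in_span_def by blast
  then have "\<forall>i\<in>{1..n}. x i = (\<Sum>m\<in>{1..Suc k}. (if m = Suc k then a else c m) * h m i)"
    by simp
  then show "in_span n h (Suc k) x"
    unfolding in_span_def by (rule exI[of _ "\<lambda>m. if m = Suc k then a else c m"])
qed

lemma in_span_Suc_eqI:
  assumes eq: "in_span n f k = in_span n h k" and z: "in_span n f k z" and "\<kappa> \<noteq> 0"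
    and h: "\<And>i. i \<in> {1..n} \<Longrightarrow> h (Suc k) i = z i + \<kappa> * f (Suc k) i"
  shows "in_span n f (Suc k) = in_span n h (Suc k)"
proof (intro ext iffI)
  fix x assume "in_span n f (Suc k) x"
  then obtain y a where y: "in_span n f k y" "\<forall>i\<in>{1..n}. x i = y i + a * f (Suc k) i"
    unfolding in_span_Suc by blast
  have "in_span n h k (\<lambda>i. y i - (a / \<kappa>) * z i)"
    using in_span_lincomb[OF y(1) z, of _ 1 "- (a / \<kappa>)"] eq by simp
  moreover have "\<forall>i\<in>{1..n}. x i = (y i - (a / \<kappa>) * z i) + (a / \<kappa>) * h (Suc k) i"
    using y(2) h \<open>\<kappa> \<noteq> 0\<close> by (simp add: field_simps)
  ultimately show "in_span n h (Suc k) x"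
    unfolding in_span_Suc by blast
next
  fix x assume "in_span n h (Suc k) x"
  then obtain y a where y: "in_span n h k y" "\<forall>i\<in>{1..n}. x i = y i + a * h (Suc k) i"
    unfolding in_span_Suc by blast
  have "in_span n f k (\<lambda>i. y i + a * z i)"
    using in_span_lincomb[OF _ z, of y _ 1 a] y(1) eq by simp
  moreover have "\<forall>i\<in>{1..n}. x i = (y i + a * z i) + (a * \<kappa>) * f (Suc k) i"
    using y(2) h by (simp add: algebra_simps)
  ultimately show "in_span n f (Suc k) x"
    unfolding in_span_Suc by blast
qed

lemma in_span_shear_swap:
  assumes "1 \<le> r" "Suc r \<le> k"
  shows "in_span n (f(r := (\<lambda>i. f (Suc r) i + \<beta> * f r i), Suc r := f r)) k = in_span n f k"
    (is "in_span n ?f k = _")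
proof (rule in_span_eqI)
  have r: "r \<in> {1..k}" "Suc r \<in> {1..k}" using assms by auto
  fix j assume j: "j \<in> {1..k}"
  have "in_span n f k (\<lambda>i. f (Suc r) i + \<beta> * f r i)"
    by (rule in_span_lincomb[where a = 1 and b = \<beta>, OF in_span_gen[OF r(2)] in_span_gen[OF r(1)]]) simp
  then show "in_span n f k (?f j)"
    using j in_span_gen[of _ k n f] r by auto
  have "in_span n ?f k (f (Suc r))"
    by (rule in_span_lincomb[where a = 1 and b = "- \<beta>", OF in_span_gen[OF r(1)] in_span_gen[OF r(2)]]) simp
  moreover have "in_span n ?f k (f r)"
    using in_span_gen[OF r(2), of n ?f] by simp
  moreover have "in_span n ?f k (f j)" if "j \<noteq> r" "j \<noteq> Suc r"
    using in_span_gen[OF \<open>j \<in> {1..k}\<close>, of n ?f] that by simp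
  ultimately show "in_span n ?f k (f j)"
    by (cases "j = r"; cases "j = Suc r") simp_all
qed

lemma flag_of_eq_in_span:
  assumes "k \<in> {1..n}"
  shows "flag_of n g k = {x. in_span n (col g) k x \<and> (\<forall>i. i \<notin> {1..n} \<longrightarrow> x i = 0)}"
proof (rule Set.set_eqI, rule iffI)
  fix x assume "x \<in> flag_of n g k"
  then show "x \<in> {x. in_span n (col g) k x \<and> (\<forall>i. i \<notin> {1..n} \<longrightarrow> x i = 0)}"
    using assms by (auto simp: flag_of_def in_span_def col_def)
next
  fix x assume "x \<in> {x. in_span n (col g) k x \<and> (\<forall>i. i \<notin> {1..n} \<longrightarrow> x i = 0)}"
  then obtain c where "\<forall>i\<in>{1..n}. x i = (\<Sum>j\<in>{1..k}. c j * g i j)" "\<forall>i. i \<notin> {1..n} \<longrightarrow> x i = 0"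
    by (auto simp: in_span_def col_def)
  then have "x = (\<lambda>i. if i \<in> {1..n} then \<Sum>j\<in>{1..k}. c j * g i j else 0)"
    by (intro ext) auto
  then show "x \<in> flag_of n g k"
    using assms by (auto simp: flag_of_def)
qed

lemma in_span_eq_if_flag_of_eq:
  assumes "flag_of n g = flag_of n h" "k \<in> {1..n}"
  shows "in_span n (col g) k = in_span n (col h) k"
proof
  fix x :: "nat \<Rightarrow> real"
  define x' where "x' = (\<lambda>i. if i \<in> {1..n} then x i else 0)"
  have "in_span n (col g) k x \<longleftrightarrow> in_span n (col g) k x'"
    by (rule in_span_cong) (simp add: x'_def)
  also have "\<dots> \<longleftrightarrow> x' \<in> flag_of n g k"
    using flag_of_eq_in_span[OF assms(2)] by (auto simp: x'_def)
  also have "\<dots> \<longleftrightarrow> in_span n (col h) k x'"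
    using assms flag_of_eq_in_span[OF assms(2)] by (auto simp: x'_def)
  also have "\<dots> \<longleftrightarrow> in_span n (col h) k x"
    by (rule in_span_cong) (simp add: x'_def)
  finally show "in_span n (col g) k x = in_span n (col h) k x" .
qed

lemma flag_of_cong:
  assumes "mat_eq_on n g h"
  shows "flag_of n g = flag_of n h"
proof
  fix k
  have "(\<lambda>i. if i \<in> {1..n} then \<Sum>j\<in>{1..k}. c j * g i j else 0)
      = (\<lambda>i. if i \<in> {1..n} then \<Sum>j\<in>{1..k}. c j * h i j else 0)" if "k \<le> n" for c
    using assms that by (intro ext if_cong refl sum.cong) (auto simp: mat_eq_on_def)
  then show "flag_of n g k = flag_of n h k"
    by (simp add: flag_of_def)
qed

definition dot :: "nat \<Rightarrow> (nat \<Rightarrow> real) \<Rightarrow> (nat \<Rightarrow> real) \<Rightarrow> real" where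
  "dot n x y = (\<Sum>i\<in>{1..n}. x i * y i)"

definition orthonormal_cols :: "nat \<Rightarrow> rmat \<Rightarrow> bool" where
  "orthonormal_cols n g \<longleftrightarrow>
     (\<forall>j\<in>{1..n}. \<forall>k\<in>{1..n}. dot n (col g j) (col g k) = (if j = k then 1 else 0))"

lemma dot_lincomb_left: "dot n (\<lambda>i. a * x i + b * y i) z = a * dot n x z + b * dot n y z"
  by (simp add: dot_def algebra_simps sum.distrib sum_distrib_left)

lemma dot_lincomb_right: "dot n z (\<lambda>i. a * x i + b * y i) = a * dot n z x + b * dot n z y"
  by (simp add: dot_def algebra_simps sum.distrib sum_distrib_left)

lemma dot_diff_left: "dot n (\<lambda>i. a * x i - b * y i) z = a * dot n x z - b * dot n y z"
  by (simp add: dot_def algebra_simps sum_subtractf sum_distrib_left)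

lemma dot_diff_right: "dot n z (\<lambda>i. a * x i - b * y i) = a * dot n z x - b * dot n z y"
  by (simp add: dot_def algebra_simps sum_subtractf sum_distrib_left)

lemma dot_cong:
  "(\<And>i. i \<in> {1..n} \<Longrightarrow> x i = x' i) \<Longrightarrow> (\<And>i. i \<in> {1..n} \<Longrightarrow> y i = y' i) \<Longrightarrow> dot n x y = dot n x' y'"
  unfolding dot_def by (intro sum.cong) auto

lemma dot_sum_left:
  assumes "\<forall>i\<in>{1..n}. x i = (\<Sum>m\<in>S. c m * h m i)" "finite S"
  shows "dot n x z = (\<Sum>m\<in>S. c m * dot n (h m) z)"
proof -
  have "dot n x z = (\<Sum>i\<in>{1..n}. (\<Sum>m\<in>S. c m * h m i) * z i)"
    unfolding dot_def using assms by (intro sum.cong) auto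
  also have "\<dots> = (\<Sum>m\<in>S. c m * dot n (h m) z)"
    unfolding dot_def by (simp add: sum_distrib_right sum_distrib_left mult.assoc, rule sum.swap)
  finally show ?thesis .
qed

lemma col_rot_cols:
  "col (rot_cols g r x) m = (if m = r then (\<lambda>i. cos x * col g r i + (- sin x) * col g (Suc r) i)
     else if m = Suc r then (\<lambda>i. sin x * col g r i + cos x * col g (Suc r) i) else col g m)"
  by (auto simp: rot_cols_def col_def)

lemma orthonormal_cols_cong:
  assumes "mat_eq_on n g h"
  shows "orthonormal_cols n g \<longleftrightarrow> orthonormal_cols n h"
proof -
  have "dot n (col g j) (col g k) = dot n (col h j) (col h k)" if "j \<in> {1..n}" "k \<in> {1..n}" for j k
    using assms that by (intro dot_cong) (auto simp: mat_eq_on_def col_def)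
  then show ?thesis by (simp add: orthonormal_cols_def)
qed

lemma orthonormal_cols_rot_cols:
  assumes "orthonormal_cols n g" "1 \<le> r" "r < n"
  shows "orthonormal_cols n (rot_cols g r x)"
  unfolding orthonormal_cols_def
proof (intro ballI)
  fix j k assume jk: "j \<in> {1..n}" "k \<in> {1..n}"
  have r: "r \<in> {1..n}" "Suc r \<in> {1..n}" using assms by auto
  have on: "a \<in> {1..n} \<Longrightarrow> b \<in> {1..n} \<Longrightarrow> dot n (col g a) (col g b) = (if a = b then 1 else 0)" for a b
    using assms(1) by (simp add: orthonormal_cols_def)
  show "dot n (col (rot_cols g r x) j) (col (rot_cols g r x) k) = (if j = k then 1 else 0)"
    unfolding col_rot_cols using jk r
    by (auto simp: dot_lincomb_left dot_lincomb_right dot_diff_left dot_diff_right on algebra_simps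
        sin_squared_eq)
qed

lemma orthonormal_cols_rot_prod: "is_word n u \<Longrightarrow> orthonormal_cols n (rot_prod n u t)"
proof (induction u rule: rev_induct)
  case Nil
  then show ?case
    by (auto simp: orthonormal_cols_def dot_def col_def rot_prod_Nil
        if_distrib[where f = "\<lambda>x. x * _"] sum.delta cong: if_cong)
next
  case (snoc r u)
  then have r: "1 \<le> r" "r < n" by auto
  with snoc show ?case
    using orthonormal_cols_cong[OF rot_prod_snoc[OF r]] orthonormal_cols_rot_cols by simp
qed

lemma orthonormal_col_not_in_span:
  assumes "orthonormal_cols n g" "j \<in> {1..n}" "k < j"
  shows "\<not> in_span n (col g) k (col g j)"
proof
  assume "in_span n (col g) k (col g j)"
  then obtain c where "\<forall>i\<in>{1..n}. col g j i = (\<Sum>m\<in>{1..k}. c m * col g m i)"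
    unfolding in_span_def by blast
  then have "dot n (col g j) (col g j) = (\<Sum>m\<in>{1..k}. c m * dot n (col g m) (col g j))"
    by (rule dot_sum_left) simp
  also have "\<dots> = 0"
    using assms by (intro sum.neutral) (auto simp: orthonormal_cols_def)
  finally show False
    using assms by (simp add: orthonormal_cols_def)
qed

section \<open>Bruhat cells and injectivity of the characteristic maps\<close>

definition pivots :: "nat \<Rightarrow> (nat \<Rightarrow> nat) \<Rightarrow> (nat \<Rightarrow> nat \<Rightarrow> real) \<Rightarrow> bool" where
  "pivots n w f \<longleftrightarrow> (\<forall>k\<in>{1..n}. f k (w k) = 1 \<and> (\<forall>i. w k < i \<longrightarrow> f k i = 0))"

text \<open>The flag of \<open>g\<close> lies in the Bruhat cell \<open>N \<cdot> w b\<^sub>0\<close>: its \<open>k\<close>-th subspace has a basis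
  \<open>f 1, \<dots>, f k\<close> in which \<open>f m\<close> has a \<open>1\<close> in row \<open>w m\<close> and zeros below it.\<close>

definition bruhat_cell :: "nat \<Rightarrow> (nat \<Rightarrow> nat) \<Rightarrow> rmat \<Rightarrow> bool" where
  "bruhat_cell n w g \<longleftrightarrow> (\<exists>f. pivots n w f \<and> (\<forall>k\<le>n. in_span n f k = in_span n (col g) k))"

lemma bruhat_cellE:
  assumes "bruhat_cell n w g"
  obtains f where "pivots n w f" "\<And>k. k \<le> n \<Longrightarrow> in_span n f k = in_span n (col g) k"
  using assms that unfolding bruhat_cell_def by auto

lemma pivot_lincomb_coeff_eq_0:
  fixes w :: "'a \<Rightarrow> nat" and f :: "'a \<Rightarrow> nat \<Rightarrow> real"
  assumes "finite S" and w: "inj_on w S" "w ` S \<subseteq> {1..n}"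
    and piv: "\<And>m. m \<in> S \<Longrightarrow> f m (w m) = 1" "\<And>m i. m \<in> S \<Longrightarrow> w m < i \<Longrightarrow> f m i = 0"
    and y: "\<And>i. i \<in> {1..n} \<Longrightarrow> B < i \<Longrightarrow> (\<Sum>m\<in>S. c m * f m i) = 0"
    and m: "m \<in> S" "B < w m"
  shows "c m = 0"
proof (rule ccontr)
  assume "c m \<noteq> 0"
  define M where "M = {m \<in> S. B < w m \<and> c m \<noteq> 0}"
  have "finite (w ` M)" "w ` M \<noteq> {}"
    using \<open>finite S\<close> m \<open>c m \<noteq> 0\<close> by (auto simp: M_def)
  then obtain m0 where m0: "m0 \<in> M" "w m0 = Max (w ` M)"
    using Max_in by (metis imageE)
  have max: "w m' \<le> w m0" if "m' \<in> M" for m'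
    using that m0(2) \<open>finite (w ` M)\<close> by simp
  have other: "c m' * f m' (w m0) = 0" if "m' \<in> S" "m' \<noteq> m0" for m'
  proof (cases "c m' = 0")
    case False
    have "w m' \<noteq> w m0"
      using w(1) that m0(1) by (auto simp: M_def dest: inj_onD)
    moreover have "w m' \<le> w m0"
      using max[of m'] False that m0(1) by (cases "B < w m'") (auto simp: M_def)
    ultimately show ?thesis using piv(2)[OF that(1)] by simp
  qed simp
  have "m0 \<in> S" "B < w m0" "c m0 \<noteq> 0" using m0(1) by (auto simp: M_def)
  moreover have "(\<Sum>m'\<in>S - {m0}. c m' * f m' (w m0)) = 0"
    using other by (intro sum.neutral) auto
  ultimately have "(\<Sum>m'\<in>S. c m' * f m' (w m0)) = c m0"
    using \<open>finite S\<close> piv(1) by (simp add: sum.remove)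
  moreover have "(\<Sum>m'\<in>S. c m' * f m' (w m0)) = 0"
    using y w(2) \<open>m0 \<in> S\<close> \<open>B < w m0\<close> by auto
  ultimately show False
    using \<open>c m0 \<noteq> 0\<close> by simp
qed

text \<open>The key to the injectivity of \<open>\<Phi>\<^sub>u\<close>: at an ascent \<open>r\<close> of \<open>w\<close>, the \<open>r\<close>-th subspace of a flag
  in the Bruhat cell of \<open>w\<close> is determined by the \<open>(r - 1)\<close>-th and the \<open>(r + 1)\<close>-th.\<close>

lemma in_span_pivots_iff:
  assumes f: "pivots n w f" and w: "w permutes {1..n}" and r: "1 \<le> r" "r < n" "w r < w (Suc r)"
  shows "in_span n f r z \<longleftrightarrow> (\<exists>x y. in_span n f (r - 1) x \<and> in_span n f (Suc r) y \<and>
            (\<forall>i\<in>{1..n}. w r < i \<longrightarrow> y i = 0) \<and> (\<forall>i\<in>{1..n}. z i = x i + y i))"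
proof
  assume "in_span n f r z"
  then obtain x a where x: "in_span n f (r - 1) x" "\<forall>i\<in>{1..n}. z i = x i + a * f r i"
    using r in_span_Suc[of n f "r - 1" z] by auto
  have fr: "in_span n f (Suc r) (f r)"
    by (rule in_span_gen) (use r in auto)
  have "in_span n f (Suc r) (\<lambda>i. a * f r i)"
    by (rule in_span_lincomb[OF fr fr, where a = a and b = 0]) simp
  moreover have "\<forall>i\<in>{1..n}. w r < i \<longrightarrow> a * f r i = 0"
    using f r by (simp add: pivots_def)
  ultimately show "\<exists>x y. in_span n f (r - 1) x \<and> in_span n f (Suc r) y \<and>
      (\<forall>i\<in>{1..n}. w r < i \<longrightarrow> y i = 0) \<and> (\<forall>i\<in>{1..n}. z i = x i + y i)"
    using x by (intro exI[of _ x] exI[of _ "\<lambda>i. a * f r i"]) simp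
next
  assume "\<exists>x y. in_span n f (r - 1) x \<and> in_span n f (Suc r) y \<and>
      (\<forall>i\<in>{1..n}. w r < i \<longrightarrow> y i = 0) \<and> (\<forall>i\<in>{1..n}. z i = x i + y i)"
  then obtain x y where xy: "in_span n f (r - 1) x" "in_span n f (Suc r) y"
      "\<forall>i\<in>{1..n}. w r < i \<longrightarrow> y i = 0" "\<forall>i\<in>{1..n}. z i = x i + y i"
    by blast
  obtain c where c: "\<forall>i\<in>{1..n}. y i = (\<Sum>m\<in>{1..Suc r}. c m * f m i)"
    using xy(2) unfolding in_span_def by (rule exE)
  note inj = inj_on_subset[OF permutes_inj[OF w] subset_UNIV, of "{1..Suc r}"]
  have "w ` {1..Suc r} \<subseteq> w ` {1..n}"
    using r by (intro image_mono) auto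
  then have img: "w ` {1..Suc r} \<subseteq> {1..n}"
    unfolding permutes_image[OF w] .
  have piv: "f m (w m) = 1" "w m < i \<Longrightarrow> f m i = 0" if "m \<in> {1..Suc r}" for m i
    using f r that by (simp_all add: pivots_def)
  have low: "(\<Sum>m\<in>{1..Suc r}. c m * f m i) = 0" if "i \<in> {1..n}" "w r < i" for i
    using c xy(3) that by simp
  have "c (Suc r) = 0"
    by (rule pivot_lincomb_coeff_eq_0[OF _ inj img piv low]) (use r in auto)
  then have "\<forall>i\<in>{1..n}. y i = (\<Sum>m\<in>{1..r}. c m * f m i)"
    using c by simp
  then have "in_span n f r y"
    unfolding in_span_def by blast
  moreover have "in_span n f r x"
    by (rule in_span_mono[OF xy(1)]) simp
  ultimately show "in_span n f r z"
    by (rule in_span_lincomb[where a = 1 and b = 1]) (use xy(4) in simp)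
qed

lemma rot_cols_inverse: "rot_cols (rot_cols g r x) r (- x) = g"
  by (intro ext) (simp add: rot_cols_def rotation_inverse)

lemma in_span_col_rot_cols:
  assumes "1 \<le> r" "Suc r \<le> k" "j \<in> {1..k}"
  shows "in_span n (col g) k (col (rot_cols g r x) j)"
proof -
  have "r \<in> {1..k}" "Suc r \<in> {1..k}" using assms by auto
  then have gr: "in_span n (col g) k (col g r)" "in_span n (col g) k (col g (Suc r))"
    by (auto intro: in_span_gen)
  have "in_span n (col g) k (\<lambda>i. cos x * col g r i + (- sin x) * col g (Suc r) i)"
    "in_span n (col g) k (\<lambda>i. sin x * col g r i + cos x * col g (Suc r) i)"
    by (rule in_span_lincomb[OF gr, where a = "cos x" and b = "- sin x"], simp)
       (rule in_span_lincomb[OF gr, where a = "sin x" and b = "cos x"], simp)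
  then show ?thesis
    unfolding col_rot_cols using in_span_gen[OF assms(3)] by auto
qed

lemma in_span_rot_cols:
  assumes "1 \<le> r" "k \<noteq> r"
  shows "in_span n (col (rot_cols g r x)) k = in_span n (col g) k"
proof (cases "k < r")
  case True
  then show ?thesis
    by (intro in_span_gen_cong) (auto simp: col_rot_cols)
next
  case False
  then have "Suc r \<le> k" using assms by auto
  show ?thesis
  proof (rule in_span_eqI)
    show "in_span n (col g) k (col (rot_cols g r x) j)" if "j \<in> {1..k}" for j
      by (rule in_span_col_rot_cols[OF assms(1) \<open>Suc r \<le> k\<close> that])
    show "in_span n (col (rot_cols g r x)) k (col g j)" if "j \<in> {1..k}" for j
      using in_span_col_rot_cols[OF assms(1) \<open>Suc r \<le> k\<close> that, of n "rot_cols g r x" "- x"]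
      by (simp add: rot_cols_inverse)
  qed
qed

lemma in_span_col_cong: "mat_eq_on n g h \<Longrightarrow> k \<le> n \<Longrightarrow> in_span n (col g) k = in_span n (col h) k"
  by (intro in_span_gen_cong) (auto simp: mat_eq_on_def col_def)

lemma bruhat_cell_cong: "mat_eq_on n g h \<Longrightarrow> bruhat_cell n w g \<longleftrightarrow> bruhat_cell n w h"
  unfolding bruhat_cell_def by (simp add: in_span_col_cong)

lemma pivots_shear_swap:
  assumes "pivots n w f" "1 \<le> r" "r < n" "w r < w (Suc r)"
  shows "pivots n (w \<circ> sgen r) (f(r := (\<lambda>i. f (Suc r) i + \<beta> * f r i), Suc r := f r))"
  unfolding pivots_def
proof (intro ballI conjI allI impI)
  fix k assume k: "k \<in> {1..n}"
  have piv: "f m (w m) = 1" "\<And>i. w m < i \<Longrightarrow> f m i = 0" if "m \<in> {1..n}" for m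
    using assms(1) that by (auto simp: pivots_def)
  note pk = piv[OF k] and pr = piv[of r] and pr1 = piv[of "Suc r"]
  show "(f(r := (\<lambda>i. f (Suc r) i + \<beta> * f r i), Suc r := f r)) k ((w \<circ> sgen r) k) = 1"
    using pk pr pr1 assms(2-4) by (auto simp: sgen_apply)
  fix i assume "(w \<circ> sgen r) k < i"
  then show "(f(r := (\<lambda>i. f (Suc r) i + \<beta> * f r i), Suc r := f r)) k i = 0"
    using pk pr pr1 assms(2-4) by (auto simp: sgen_apply split: if_splits)
qed

lemma rot_cols_col_decomp:
  assumes spans: "\<And>k. k \<le> n \<Longrightarrow> in_span n f k = in_span n (col g) k"
    and orth: "orthonormal_cols n g" and r: "1 \<le> r" "r < n" and "sin x \<noteq> 0"
  obtains z \<beta> \<kappa> where "in_span n f (r - 1) z" "\<kappa> \<noteq> 0"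
    "\<And>i. i \<in> {1..n} \<Longrightarrow> col (rot_cols g r x) r i = z i + \<kappa> * (f (Suc r) i + \<beta> * f r i)"
proof -
  have "in_span n f (Suc r) (col g (Suc r))"
    using spans[of "Suc r"] r in_span_gen[of "Suc r" "Suc r" n "col g"] by simp
  then obtain y \<gamma> where y: "in_span n f r y" "\<forall>i\<in>{1..n}. col g (Suc r) i = y i + \<gamma> * f (Suc r) i"
    unfolding in_span_Suc by (elim exE conjE)
  have "\<gamma> \<noteq> 0"
  proof
    assume "\<gamma> = 0"
    then have "col g (Suc r) i = y i" if "i \<in> {1..n}" for i
      using y(2) that by simp
    then have "in_span n f r (col g (Suc r))"
      using y(1) in_span_cong[of n "col g (Suc r)" y] by simp
    then show False
      using spans[of r] orthonormal_col_not_in_span[OF orth, of "Suc r" r] r by simp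
  qed
  have "in_span n f r (col g r)"
    using spans[of r] r in_span_gen[of r r n "col g"] by simp
  then have "in_span n f r (\<lambda>i. cos x * col g r i + (- sin x) * y i)"
    by (rule in_span_lincomb[OF _ y(1), where a = "cos x" and b = "- sin x"]) simp
  then have "in_span n f (Suc (r - 1)) (\<lambda>i. cos x * col g r i + (- sin x) * y i)"
    using r by simp
  then obtain z \<beta> where z: "in_span n f (r - 1) z"
      "\<forall>i\<in>{1..n}. cos x * col g r i + (- sin x) * y i = z i + \<beta> * f r i"
    unfolding in_span_Suc using r by auto
  define \<kappa> where "\<kappa> = - sin x * \<gamma>"
  have "\<kappa> \<noteq> 0"
    using \<open>\<gamma> \<noteq> 0\<close> \<open>sin x \<noteq> 0\<close> by (simp add: \<kappa>_def)
  moreover have col_r: "col (rot_cols g r x) r i = z i + \<kappa> * (f (Suc r) i + (\<beta> / \<kappa>) * f r i)"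
    if "i \<in> {1..n}" for i
  proof -
    have "col (rot_cols g r x) r i = cos x * col g r i + (- sin x) * (y i + \<gamma> * f (Suc r) i)"
      using y(2) that by (simp add: col_rot_cols)
    also have "\<dots> = (cos x * col g r i + (- sin x) * y i) + \<kappa> * f (Suc r) i"
      by (simp add: \<kappa>_def algebra_simps)
    also have "\<dots> = z i + \<kappa> * (f (Suc r) i + (\<beta> / \<kappa>) * f r i)"
      using z(2) that \<open>\<kappa> \<noteq> 0\<close> by (simp add: algebra_simps)
    finally show ?thesis .
  qed
  ultimately show ?thesis
    using that[OF z(1) _ col_r] by blast
qed

lemma bruhat_cell_rot_cols:
  assumes cell: "bruhat_cell n w g" and orth: "orthonormal_cols n g"
    and r: "1 \<le> r" "r < n" "w r < w (Suc r)" and "sin x \<noteq> 0"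
  shows "bruhat_cell n (w \<circ> sgen r) (rot_cols g r x)"
proof -
  let ?g = "rot_cols g r x"
  obtain f where f: "pivots n w f" and spans: "\<And>k. k \<le> n \<Longrightarrow> in_span n f k = in_span n (col g) k"
    by (rule bruhat_cellE[OF cell]) fast
  obtain z \<beta> \<kappa> where z: "in_span n f (r - 1) z" and "\<kappa> \<noteq> 0"
    and col_r: "\<And>i. i \<in> {1..n} \<Longrightarrow> col ?g r i = z i + \<kappa> * (f (Suc r) i + \<beta> * f r i)"
    by (rule rot_cols_col_decomp[OF spans orth r(1,2) \<open>sin x \<noteq> 0\<close>]) auto
  define f' where "f' = f(r := (\<lambda>i. f (Suc r) i + \<beta> * f r i), Suc r := f r)"
  have f'_low: "in_span n f' k = in_span n f k" if "k < r" for k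
    using that by (intro in_span_gen_cong) (simp add: f'_def)
  have low: "in_span n f' k = in_span n (col ?g) k" if "k < r" for k
    using that r f'_low spans[of k] in_span_rot_cols[of r k n g x] by simp
  have mid: "in_span n f' r = in_span n (col ?g) r"
  proof -
    have "in_span n f' (Suc (r - 1)) = in_span n (col ?g) (Suc (r - 1))"
    proof (rule in_span_Suc_eqI[OF low _ \<open>\<kappa> \<noteq> 0\<close>])
      show "in_span n f' (r - 1) z" using z f'_low[of "r - 1"] r by simp
      show "col ?g (Suc (r - 1)) i = z i + \<kappa> * f' (Suc (r - 1)) i" if "i \<in> {1..n}" for i
        using col_r[OF that] r by (simp add: f'_def)
    qed (use r in simp)
    then show ?thesis using r by simp
  qed
  have high: "in_span n f' k = in_span n (col ?g) k" if "Suc r \<le> k" "k \<le> n" for k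
    using that r in_span_shear_swap[of r k n f \<beta>] spans[of k] in_span_rot_cols[of r k n g x]
    by (simp add: f'_def)
  have "in_span n f' k = in_span n (col ?g) k" if "k \<le> n" for k
  proof (cases k r rule: linorder_cases)
    case less
    then show ?thesis by (rule low)
  next
    case equal
    then show ?thesis using mid by simp
  next
    case greater
    then show ?thesis using high that by simp
  qed
  moreover have "pivots n (w \<circ> sgen r) f'"
    unfolding f'_def by (rule pivots_shear_swap[OF f r])
  ultimately show ?thesis
    unfolding bruhat_cell_def by auto
qed

lemma bruhat_cell_rot_prod:
  assumes "reduced_word n (word_perm u) u" "\<forall>i<length u. 0 < t i \<and> t i < pi"
  shows "bruhat_cell n (word_perm u) (rot_prod n u t)"
  using assms
proof (induction u rule: rev_induct)
  case Nil
  define f :: "nat \<Rightarrow> nat \<Rightarrow> real" where "f = (\<lambda>k i. if i = k then 1 else 0)"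
  have "pivots n id f"
    by (simp add: pivots_def f_def)
  moreover have "in_span n f k = in_span n (col (rot_prod n [] t)) k" if "k \<le> n" for k
    using that by (intro in_span_gen_cong) (auto simp: f_def col_def rot_prod_Nil)
  ultimately show ?case
    unfolding bruhat_cell_def by auto
next
  case (snoc r u)
  note red = reduced_word_snocD[OF snoc.prems(1)]
  have r: "1 \<le> r" "r < n" and u: "is_word n u"
    using snoc.prems(1) by (auto simp: reduced_word_def)
  have cell: "bruhat_cell n (word_perm u) (rot_prod n u t)"
    using snoc.IH[OF red(1)] snoc.prems(2) by simp
  have "0 < t (length u)" "t (length u) < pi"
    using snoc.prems(2) by auto
  then have "sin (t (length u)) \<noteq> 0"
    using sin_gt_zero by fastforce
  then have "bruhat_cell n (word_perm u \<circ> sgen r) (rot_cols (rot_prod n u t) r (t (length u)))"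
    by (rule bruhat_cell_rot_cols[OF cell orthonormal_cols_rot_prod[OF u] r red(2)])
  then show ?case
    unfolding word_perm_snoc bruhat_cell_cong[OF rot_prod_snoc[OF r]] .
qed

lemma bruhat_cell_in_span_eq:
  assumes cells: "bruhat_cell n w g" "bruhat_cell n w h" and w: "w permutes {1..n}"
    and r: "1 \<le> r" "r < n" "w r < w (Suc r)"
    and below: "in_span n (col g) (r - 1) = in_span n (col h) (r - 1)"
    and above: "in_span n (col g) (Suc r) = in_span n (col h) (Suc r)"
  shows "in_span n (col g) r = in_span n (col h) r"
proof -
  obtain f where f: "pivots n w f" "\<And>k. k \<le> n \<Longrightarrow> in_span n f k = in_span n (col g) k"
    by (rule bruhat_cellE[OF cells(1)]) fast
  obtain f' where f': "pivots n w f'" "\<And>k. k \<le> n \<Longrightarrow> in_span n f' k = in_span n (col h) k"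
    by (rule bruhat_cellE[OF cells(2)]) fast
  show ?thesis
    using in_span_pivots_iff[OF f(1) w r] in_span_pivots_iff[OF f'(1) w r]
      f(2)[of "r - 1"] f(2)[of r] f(2)[of "Suc r"] f'(2)[of "r - 1"] f'(2)[of r] f'(2)[of "Suc r"]
      below above r by auto
qed

lemma rot_cols_angle_eq:
  assumes orth: "orthonormal_cols n g" and r: "1 \<le> r" "r < n"
    and span: "in_span n (col (rot_cols g r \<sigma>)) r (col (rot_cols g r \<theta>) r)"
    and \<theta>: "0 < \<theta>" "\<theta> < pi" and \<sigma>: "0 < \<sigma>" "\<sigma> < pi"
  shows "\<theta> = \<sigma>"
proof -
  obtain a where a: "\<forall>i\<in>{1..n}. col (rot_cols g r \<theta>) r i = (\<Sum>m\<in>{1..r}. a m * col (rot_cols g r \<sigma>) m i)"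
    using span unfolding in_span_def by auto
  have on: "dot n (col g p) (col g q) = (if p = q then 1 else 0)" if "p \<in> {1..n}" "q \<in> {1..n}" for p q
    using orth that by (simp add: orthonormal_cols_def)
  have dot_rot: "dot n (col (rot_cols g r x) r) (col g q)
      = cos x * dot n (col g r) (col g q) - sin x * dot n (col g (Suc r)) (col g q)" for x q
    by (simp add: col_rot_cols dot_diff_left)
  have coeff: "dot n (col (rot_cols g r \<theta>) r) (col g q) = a r * dot n (col (rot_cols g r \<sigma>) r) (col g q)"
    if q: "q \<in> {r, Suc r}" for q
  proof -
    have "dot n (col (rot_cols g r \<theta>) r) (col g q) = (\<Sum>m\<in>{1..r}. a m * dot n (col (rot_cols g r \<sigma>) m) (col g q))"
      by (rule dot_sum_left[OF a]) simp
    also have "\<dots> = a r * dot n (col (rot_cols g r \<sigma>) r) (col g q)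
        + (\<Sum>m\<in>{1..r - 1}. a m * dot n (col (rot_cols g r \<sigma>) m) (col g q))"
    proof -
      have "{1..r} = insert r {1..r - 1}" using r by auto
      then show ?thesis using r by simp
    qed
    also have "(\<Sum>m\<in>{1..r - 1}. a m * dot n (col (rot_cols g r \<sigma>) m) (col g q)) = 0"
      using on q r by (intro sum.neutral) (auto simp: col_rot_cols)
    finally show ?thesis by simp
  qed
  have rr: "r \<in> {1..n}" "Suc r \<in> {1..n}" using r by auto
  have "cos \<theta> = a r * cos \<sigma>"
    using coeff[of r] dot_rot on[OF rr(1) rr(1)] on[OF rr(2) rr(1)] by simp
  moreover have "sin \<theta> = a r * sin \<sigma>"
    using coeff[of "Suc r"] dot_rot on[OF rr(1) rr(2)] on[OF rr(2) rr(2)] by simp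
  ultimately have "sin (\<theta> - \<sigma>) = 0"
    by (simp add: sin_diff)
  moreover have "- pi < \<theta> - \<sigma>" "\<theta> - \<sigma> < pi"
    using \<theta> \<sigma> by auto
  ultimately show ?thesis
    using sin_eq_0_pi by force
qed

lemma rot_prod_angles_eq:
  assumes "reduced_word n (word_perm u) u"
    and "\<forall>i<length u. 0 < t i \<and> t i < pi" "\<forall>i<length u. 0 < s i \<and> s i < pi"
    and "\<forall>k\<in>{1..n}. in_span n (col (rot_prod n u t)) k = in_span n (col (rot_prod n u s)) k"
  shows "\<forall>i<length u. t i = s i"
  using assms
proof (induction u rule: rev_induct)
  case (snoc r u)
  let ?g = "rot_prod n u t" and ?h = "rot_prod n u s"
  define \<theta> \<sigma> where "\<theta> = t (length u)" and "\<sigma> = s (length u)"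
  note red = reduced_word_snocD[OF snoc.prems(1)]
  have r: "1 \<le> r" "r < n" and u: "is_word n u"
    using snoc.prems(1) by (auto simp: reduced_word_def)
  have tu: "\<forall>i<length u. 0 < t i \<and> t i < pi" and su: "\<forall>i<length u. 0 < s i \<and> s i < pi"
    using snoc.prems(2,3) by auto
  have last: "in_span n (col (rot_cols ?g r \<theta>)) k = in_span n (col (rot_cols ?h r \<sigma>)) k"
    if "k \<in> {1..n}" for k
    using snoc.prems(4) that in_span_col_cong[OF rot_prod_snoc[OF r, of u t], of k]
      in_span_col_cong[OF rot_prod_snoc[OF r, of u s], of k]
    by (simp add: \<theta>_def \<sigma>_def)
  have off: "in_span n (col ?g) k = in_span n (col ?h) k" if "k \<in> {1..n}" "k \<noteq> r" for k
    using last[OF that(1)] in_span_rot_cols[OF r(1) that(2)] by simp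
  have below: "in_span n (col ?g) (r - 1) = in_span n (col ?h) (r - 1)"
  proof (cases "r = 1")
    case True
    then show ?thesis by (intro ext) (simp add: in_span_0)
  next
    case False
    then show ?thesis using r by (intro off) auto
  qed
  have above: "in_span n (col ?g) (Suc r) = in_span n (col ?h) (Suc r)"
    using r off by simp
  have at_r: "in_span n (col ?g) r = in_span n (col ?h) r"
    by (rule bruhat_cell_in_span_eq[OF bruhat_cell_rot_prod[OF red(1) tu] bruhat_cell_rot_prod[OF red(1) su]
          word_perm_permutes[OF u] r red(2) below above])
  have spans: "in_span n (col ?g) k = in_span n (col ?h) k" if "k \<in> {1..n}" for k
    using off[OF that] at_r by (cases "k = r") simp_all
  have IH: "\<forall>i<length u. t i = s i"
    by (rule snoc.IH[OF red(1) tu su]) (intro ballI spans)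
  then have "?h = ?g"
    by (intro rot_prod_cong) simp
  then have "in_span n (col (rot_cols ?g r \<sigma>)) r (col (rot_cols ?g r \<theta>) r)"
    using last[of r] r in_span_gen[of r r n "col (rot_cols ?g r \<theta>)"] by simp
  moreover have "0 < \<theta>" "\<theta> < pi" "0 < \<sigma>" "\<sigma> < pi"
    using snoc.prems(2,3) by (auto simp: \<theta>_def \<sigma>_def)
  ultimately have "t (length u) = s (length u)"
    unfolding \<theta>_def \<sigma>_def by (rule rot_cols_angle_eq[OF orthonormal_cols_rot_prod[OF u] r])
  with IH show ?case
    by (simp add: less_Suc_eq)
qed (simp (no_asm))

lemma Phi_inj_on_open_cube:
  assumes "reduced_word n (word_perm u) u"
  shows "inj_on (Phi n u) (open_cube (length u))"
proof (rule inj_onI)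
  fix t s assume t: "t \<in> open_cube (length u)" and s: "s \<in> open_cube (length u)"
    and eq: "Phi n u t = Phi n u s"
  have "flag_of n (rot_prod n u t) = flag_of n (rot_prod n u s)"
    using eq by (simp only: Phi_eq_flag_of_rot_prod)
  then have "\<forall>k\<in>{1..n}. in_span n (col (rot_prod n u t)) k = in_span n (col (rot_prod n u s)) k"
    by (intro ballI in_span_eq_if_flag_of_eq)
  moreover have "\<forall>i<length u. 0 < t i \<and> t i < pi" "\<forall>i<length u. 0 < s i \<and> s i < pi"
    using t s by (simp_all add: open_cube_def)
  ultimately have agree: "\<forall>i<length u. t i = s i"
    using rot_prod_angles_eq[OF assms] by blast
  show "t = s"
  proof
    fix i
    show "t i = s i"
      using agree t s by (cases "i < length u") (simp_all add: open_cube_def)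
  qed
qed

section \<open>Degrees of self-maps of spheres\<close>

lemma group_isomorphisms_conj_pow_iff:
  assumes iso: "group_isomorphisms G H \<phi> \<psi>" and "group G" "group H"
    and F: "\<And>x. x \<in> carrier G \<Longrightarrow> F x \<in> carrier G"
  shows "(\<forall>x\<in>carrier G. F x = x [^]\<^bsub>G\<^esub> (d::int)) \<longleftrightarrow> (\<forall>y\<in>carrier H. \<phi> (F (\<psi> y)) = y [^]\<^bsub>H\<^esub> d)"
proof -
  have \<phi>: "\<phi> \<in> hom G H" and \<psi>: "\<psi> \<in> hom H G"
    and \<psi>\<phi>: "\<And>x. x \<in> carrier G \<Longrightarrow> \<psi> (\<phi> x) = x" and \<phi>\<psi>: "\<And>y. y \<in> carrier H \<Longrightarrow> \<phi> (\<psi> y) = y"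
    using iso by (auto simp: group_isomorphisms_def)
  have \<phi>_carrier: "x \<in> carrier G \<Longrightarrow> \<phi> x \<in> carrier H" and \<psi>_carrier: "y \<in> carrier H \<Longrightarrow> \<psi> y \<in> carrier G"
    for x y using \<phi> \<psi> by (auto simp: hom_def)
  show ?thesis
  proof
    assume "\<forall>x\<in>carrier G. F x = x [^]\<^bsub>G\<^esub> d"
    then show "\<forall>y\<in>carrier H. \<phi> (F (\<psi> y)) = y [^]\<^bsub>H\<^esub> d"
      using hom_int_pow[OF \<phi> \<psi>_carrier] \<phi>\<psi> \<open>group G\<close> \<open>group H\<close> \<psi>_carrier by simp
  next
    assume *: "\<forall>y\<in>carrier H. \<phi> (F (\<psi> y)) = y [^]\<^bsub>H\<^esub> d"
    show "\<forall>x\<in>carrier G. F x = x [^]\<^bsub>G\<^esub> d"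
    proof
      fix x assume x: "x \<in> carrier G"
      have "F x = \<psi> (\<phi> (F (\<psi> (\<phi> x))))"
        using \<psi>\<phi>[OF x] \<psi>\<phi>[OF F[OF x]] by simp
      also have "\<dots> = \<psi> (\<phi> x [^]\<^bsub>H\<^esub> d)"
        using * \<phi>_carrier[OF x] by simp
      also have "\<dots> = x [^]\<^bsub>G\<^esub> d"
        using hom_int_pow[OF \<psi> \<phi>_carrier[OF x]] \<psi>\<phi>[OF x] \<open>group G\<close> \<open>group H\<close> by simp
      finally show "F x = x [^]\<^bsub>G\<^esub> d" .
    qed
  qed
qed

lemma map_degree_homeomorphic_conj:
  assumes hk: "homeomorphic_maps X Y h k" and f: "continuous_map X X f"
  shows "map_degree p X f = map_degree p Y (h \<circ> f \<circ> k)"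
proof -
  have h: "continuous_map X Y h" and k: "continuous_map Y X k"
    and kh: "\<And>x. x \<in> topspace X \<Longrightarrow> k (h x) = x" and hk': "\<And>y. y \<in> topspace Y \<Longrightarrow> h (k y) = y"
    using hk by (auto simp: homeomorphic_maps_def)
  have iso: "group_isomorphisms (reduced_homology_group (int p) X) (reduced_homology_group (int p) Y)
      (hom_induced (int p) X {} Y {} h) (hom_induced (int p) Y {} X {} k)"
  proof (rule homotopy_equivalence_reduced_homology_group_isomorphisms[OF h k])
    show "homotopic_with (\<lambda>h. True) X X (k \<circ> h) id"
      by (rule homotopic_with_equal) (use h k kh in \<open>auto intro: continuous_map_compose\<close>)
    show "homotopic_with (\<lambda>k. True) Y Y (h \<circ> k) id"
      by (rule homotopic_with_equal) (use h k hk' in \<open>auto intro: continuous_map_compose\<close>)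
  qed
  have "hom_induced (int p) Y {} Y {} (h \<circ> f \<circ> k)
      = hom_induced (int p) X {} Y {} h \<circ> hom_induced (int p) X {} X {} f \<circ> hom_induced (int p) Y {} X {} k"
    using hom_induced_compose[OF continuous_map_compose[OF k f] _ h, of "{}" "{}" "{}" "int p"]
      hom_induced_compose[OF k _ f, of "{}" "{}" "{}" "int p"]
    by (simp add: comp_assoc)
  moreover have "hom_induced (int p) X {} X {} f x \<in> carrier (reduced_homology_group (int p) X)"
    if "x \<in> carrier (reduced_homology_group (int p) X)" for x
    by (rule hom_induced_reduced[OF that])
  note conj = group_isomorphisms_conj_pow_iff[OF iso group_reduced_homology_group group_reduced_homology_group this]
  ultimately show ?thesis
    unfolding map_degree_def by (simp add: conj)
qed

lemma map_degree_nsphere: "map_degree p (nsphere p) f = Brouwer_degree2 p f"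
  unfolding map_degree_def Brouwer_degree2_def by simp

lemma Brouwer_degree2_homeomorphic_conj:
  assumes "homeomorphic_maps (nsphere p) (nsphere p) h k" "continuous_map (nsphere p) (nsphere p) f"
  shows "Brouwer_degree2 p (h \<circ> f \<circ> k) = Brouwer_degree2 p f"
  using map_degree_homeomorphic_conj[OF assms, of p] by (simp add: map_degree_nsphere)

definition reflect_coord :: "nat \<Rightarrow> (nat \<Rightarrow> real) \<Rightarrow> nat \<Rightarrow> real" where
  "reflect_coord k x = (\<lambda>i. if i = k then - x i else x i)"

definition plane_rot :: "nat \<Rightarrow> real \<Rightarrow> (nat \<Rightarrow> real) \<Rightarrow> nat \<Rightarrow> real" where
  "plane_rot m \<theta> x = (\<lambda>i. if i = m then cos \<theta> * x m - sin \<theta> * x (Suc m)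
     else if i = Suc m then sin \<theta> * x m + cos \<theta> * x (Suc m) else x i)"

lemma continuous_map_nsphere_selfI:
  assumes "\<And>j. continuous_map (powertop_real UNIV) euclideanreal (\<lambda>x. f x j)"
    and "\<And>x. x \<in> topspace (nsphere n) \<Longrightarrow> f x \<in> topspace (nsphere n)"
  shows "continuous_map (nsphere n) (nsphere n) f"
  using assms unfolding nsphere continuous_map_in_subtopology
  by (auto intro: continuous_map_from_subtopology simp: continuous_map_componentwise_UNIV)

lemma continuous_map_swap_coords:
  assumes "i \<le> n" "j \<le> n"
  shows "continuous_map (nsphere n) (nsphere n) (swap_coords i j)"
proof (rule continuous_map_nsphere_selfI)
  show "continuous_map (powertop_real UNIV) euclideanreal (\<lambda>x. swap_coords i j x k)" for k
    unfolding swap_coords_def comp_def by (rule continuous_map_product_projection) simp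
  have bij: "bij_betw (Transposition.transpose i j) {..n} {..n}"
    using assms by (intro bij_betwI[where g = "Transposition.transpose i j"]) (auto simp: Transposition.transpose_def)
  show "swap_coords i j x \<in> topspace (nsphere n)" if "x \<in> topspace (nsphere n)" for x
    using that assms sum.reindex_bij_betw[OF bij, of "\<lambda>k. (x k)\<^sup>2"]
    by (auto simp: nsphere swap_coords_def Transposition.transpose_def)
qed

lemma plane_rot_sum_squares:
  assumes "Suc m \<le> n"
  shows "(\<Sum>i\<le>n. (plane_rot m \<theta> x i)\<^sup>2) = (\<Sum>i\<le>n. (x i)\<^sup>2)"
proof -
  have "(\<Sum>i\<le>n. (plane_rot m \<theta> x i)\<^sup>2 - (x i)\<^sup>2)
      = (\<Sum>i\<in>{m, Suc m}. (plane_rot m \<theta> x i)\<^sup>2 - (x i)\<^sup>2)"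
    using assms by (intro sum.mono_neutral_right) (auto simp: plane_rot_def)
  then show ?thesis
    by (simp add: sum_subtractf plane_rot_def rotation_sum_squares)
qed

lemma continuous_map_plane_rot:
  assumes "Suc m \<le> n"
  shows "continuous_map (nsphere n) (nsphere n) (plane_rot m \<theta>)"
proof (rule continuous_map_nsphere_selfI)
  have proj: "continuous_map (powertop_real UNIV) euclideanreal (\<lambda>x. x k)" for k
    by (rule continuous_map_product_projection) simp
  show "continuous_map (powertop_real UNIV) euclideanreal (\<lambda>x. plane_rot m \<theta> x k)" for k
    unfolding plane_rot_def by (auto intro!: continuous_intros proj)
  show "plane_rot m \<theta> x \<in> topspace (nsphere n)" if "x \<in> topspace (nsphere n)" for x
    using that assms plane_rot_sum_squares[OF assms] by (auto simp: nsphere plane_rot_def)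
qed

lemma plane_rot_inverse: "plane_rot m (- \<theta>) (plane_rot m \<theta> x) = x"
  by (intro ext) (simp add: plane_rot_def rotation_inverse)

lemma homeomorphic_maps_plane_rot:
  "Suc m \<le> n \<Longrightarrow> homeomorphic_maps (nsphere n) (nsphere n) (plane_rot m \<theta>) (plane_rot m (- \<theta>))"
  using plane_rot_inverse[of m "- \<theta>"] by (simp add: homeomorphic_maps_def continuous_map_plane_rot plane_rot_inverse)

lemma homeomorphic_maps_swap_coords:
  "i \<le> n \<Longrightarrow> j \<le> n \<Longrightarrow> homeomorphic_maps (nsphere n) (nsphere n) (swap_coords i j) (swap_coords i j)"
  by (simp add: homeomorphic_maps_def continuous_map_swap_coords swap_coords_def comp_assoc)

lemma continuous_map_reflect_coord: "continuous_map (nsphere n) (nsphere n) (reflect_coord k)"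
  unfolding reflect_coord_def by (rule continuous_map_nsphere_reflection)

lemma Brouwer_degree2_reflect_coord:
  assumes "k \<le> n"
  shows "Brouwer_degree2 n (reflect_coord k) = -1"
proof -
  have "reflect_coord k = swap_coords 0 k \<circ> reflect_coord 0 \<circ> swap_coords 0 k"
    by (intro ext) (simp add: reflect_coord_def swap_coords_apply)
  then have "Brouwer_degree2 n (reflect_coord k) = Brouwer_degree2 n (reflect_coord 0)"
    using Brouwer_degree2_homeomorphic_conj[OF homeomorphic_maps_swap_coords continuous_map_reflect_coord] assms
    by simp
  moreover have "reflect_coord 0 = (\<lambda>x i. if i = 0 then - x i else x i)"
    by (intro ext) (simp add: reflect_coord_def)
  ultimately show ?thesis
    by (simp add: Brouwer_degree2_reflection)
qed

lemma swap_coords_eq_conj_reflect_coord: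
  "swap_coords m (Suc m) = plane_rot m (pi / 4) \<circ> reflect_coord (Suc m) \<circ> plane_rot m (- (pi / 4))"
proof (intro ext)
  fix x i
  have s: "sqrt 2 * sqrt 2 = (2::real)" by simp
  show "swap_coords m (Suc m) x i = (plane_rot m (pi / 4) \<circ> reflect_coord (Suc m) \<circ> plane_rot m (- (pi / 4))) x i"
    by (auto simp: swap_coords_apply plane_rot_def reflect_coord_def cos_45 sin_45 field_simps s)
qed

lemma Brouwer_degree2_swap_coords:
  assumes "Suc m \<le> n"
  shows "Brouwer_degree2 n (swap_coords m (Suc m)) = -1"
  unfolding swap_coords_eq_conj_reflect_coord
  using Brouwer_degree2_homeomorphic_conj[OF homeomorphic_maps_plane_rot[OF assms] continuous_map_reflect_coord]
    Brouwer_degree2_reflect_coord assms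
  by simp

section \<open>The cube modulo its boundary as a sphere\<close>

lemma istopology_quotient:
  "istopology (\<lambda>U. U \<subseteq> q ` topspace X \<and> openin X {x \<in> topspace X. q x \<in> U})"
proof -
  have "{x \<in> topspace X. q x \<in> S \<inter> T} = {x \<in> topspace X. q x \<in> S} \<inter> {x \<in> topspace X. q x \<in> T}"
    for S T by auto
  moreover have "{x \<in> topspace X. q x \<in> \<Union>K} = (\<Union>U\<in>K. {x \<in> topspace X. q x \<in> U})" for K
    by auto
  ultimately show ?thesis
    unfolding istopology_def by (auto intro!: openin_Union)
qed

lemma openin_quotient_topology:
  "openin (quotient_topology X q) U \<longleftrightarrow> U \<subseteq> q ` topspace X \<and> openin X {x \<in> topspace X. q x \<in> U}"
  unfolding quotient_topology_def by (simp add: topology_inverse'[OF istopology_quotient])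

lemma topspace_quotient_topology: "topspace (quotient_topology X q) = q ` topspace X"
proof
  have "{x \<in> topspace X. q x \<in> q ` topspace X} = topspace X"
    by auto
  then have "openin (quotient_topology X q) (q ` topspace X)"
    unfolding openin_quotient_topology by simp
  then show "q ` topspace X \<subseteq> topspace (quotient_topology X q)"
    by (rule openin_subset)
  show "topspace (quotient_topology X q) \<subseteq> q ` topspace X"
    using openin_quotient_topology[of X q "topspace (quotient_topology X q)"] by simp
qed

lemma quotient_map_quotient_topology: "quotient_map X (quotient_topology X q) q"
  unfolding quotient_map_def topspace_quotient_topology by (auto simp: openin_quotient_topology)

lemma map_degree_cong:
  "(\<And>x. x \<in> topspace X \<Longrightarrow> f x = g x) \<Longrightarrow> map_degree p X f = map_degree p X g"
  unfolding map_degree_def by (simp add: hom_induced_eq[of X f g])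

definition cube_topology :: "nat \<Rightarrow> (nat \<Rightarrow> real) topology" where
  "cube_topology l = subtopology (powertop_real UNIV) (cube l)"

lemma topspace_cube_topology [simp]: "topspace (cube_topology l) = cube l"
  by (simp add: cube_topology_def)

lemma cube_sphere_eq: "cube_sphere l = quotient_topology (cube_topology l) (collapse l)"
  by (simp add: cube_sphere_def cube_topology_def)

lemma topspace_cube_sphere: "topspace (cube_sphere l) = collapse l ` cube l"
  by (simp add: cube_sphere_eq topspace_quotient_topology)

lemma open_cube_subset_cube: "open_cube l \<subseteq> cube l"
  by (auto simp: open_cube_def cube_def less_imp_le)

lemma compact_space_cube_sphere: "compact_space (cube_sphere l)"
proof -
  have "cube l = Pi\<^sub>E UNIV (\<lambda>i. if i < l then {0..pi} else {0})"
    by (auto simp: cube_def PiE_UNIV_domain Pi_iff split: if_splits)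
  then have "compact_space (cube_topology l)"
    unfolding cube_topology_def by (intro compact_space_subtopology) (simp add: compactin_PiE)
  moreover have "continuous_map (cube_topology l) (cube_sphere l) (collapse l)"
    unfolding cube_sphere_eq by (rule quotient_imp_continuous_map[OF quotient_map_quotient_topology])
  ultimately show ?thesis
    unfolding compact_space_def using image_compactin topspace_cube_sphere by fastforce
qed

text \<open>The substitution \<open>y = tan (t - \<pi>/2)\<close> identifies \<open>(0, \<pi>)\<close> with \<open>\<real>\<close>; composed with the
  inverse stereographic projection \<open>\<real>\<^sup>l \<rightarrow> S\<^sup>l\<close>, it maps the open cube onto the sphere minus the
  north pole, and the boundary of the cube to the north pole.\<close>

definition cube_coord :: "(nat \<Rightarrow> real) \<Rightarrow> nat \<Rightarrow> real" where
  "cube_coord t i = tan (t i - pi / 2)"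

definition cube_norm2 :: "nat \<Rightarrow> (nat \<Rightarrow> real) \<Rightarrow> real" where
  "cube_norm2 l t = (\<Sum>i<l. (cube_coord t i)\<^sup>2)"

definition cube_to_sphere :: "nat \<Rightarrow> (nat \<Rightarrow> real) \<Rightarrow> nat \<Rightarrow> real" where
  "cube_to_sphere l t = (\<lambda>k. if k < l then 2 * cube_coord t k / (1 + cube_norm2 l t)
      else if k = l then (cube_norm2 l t - 1) / (cube_norm2 l t + 1) else 0)"

definition north_pole :: "nat \<Rightarrow> nat \<Rightarrow> real" where
  "north_pole l = (\<lambda>k. if k = l then 1 else 0)"

definition cube_sphere_to_nsphere :: "nat \<Rightarrow> (nat \<Rightarrow> real) option \<Rightarrow> nat \<Rightarrow> real" where
  "cube_sphere_to_nsphere l z = (case z of None \<Rightarrow> north_pole l | Some t \<Rightarrow> cube_to_sphere l t)"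

lemma cube_sphere_to_nsphere_collapse:
  "cube_sphere_to_nsphere l (collapse l t) = (if t \<in> open_cube l then cube_to_sphere l t else north_pole l)"
  by (simp add: cube_sphere_to_nsphere_def collapse_def)

lemma cube_norm2_nonneg: "0 \<le> cube_norm2 l t"
  unfolding cube_norm2_def by (intro sum_nonneg) auto

lemma topspace_nsphere_iff: "x \<in> topspace (nsphere l) \<longleftrightarrow> (\<Sum>i\<le>l. (x i)\<^sup>2) = 1 \<and> (\<forall>i>l. x i = 0)"
  by (simp add: nsphere)

lemma cube_to_sphere_in_nsphere: "cube_to_sphere l t \<in> topspace (nsphere l)"
proof -
  define S where "S = cube_norm2 l t"
  have "0 \<le> S" by (simp add: S_def cube_norm2_nonneg)
  have "(\<Sum>k<l. (cube_to_sphere l t k)\<^sup>2) = (\<Sum>k<l. 4 * (cube_coord t k)\<^sup>2 / (1 + S)\<^sup>2)"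
    by (intro sum.cong) (auto simp: cube_to_sphere_def S_def power_divide power_mult_distrib)
  also have "\<dots> = 4 * S / (1 + S)\<^sup>2"
    by (simp add: S_def cube_norm2_def sum_divide_distrib[symmetric] sum_distrib_left[symmetric])
  finally have "(\<Sum>k\<le>l. (cube_to_sphere l t k)\<^sup>2) = (4 * S + (S - 1)\<^sup>2) / (1 + S)\<^sup>2"
    by (simp add: lessThan_Suc_atMost[symmetric] cube_to_sphere_def S_def power_divide add_divide_distrib
        add.commute)
  also have "4 * S + (S - 1)\<^sup>2 = (1 + S)\<^sup>2"
    by (simp add: power2_eq_square algebra_simps)
  finally show ?thesis
    using \<open>0 \<le> S\<close> by (simp add: topspace_nsphere_iff cube_to_sphere_def)
qed

lemma north_pole_in_nsphere: "north_pole l \<in> topspace (nsphere l)"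
proof -
  have "(\<Sum>k\<le>l. (north_pole l k)\<^sup>2) = (\<Sum>k\<le>l. if k = l then 1 else 0)"
    by (intro sum.cong) (auto simp: north_pole_def)
  then show ?thesis
    by (simp add: topspace_nsphere_iff north_pole_def)
qed

lemma cube_to_sphere_neq_north_pole: "cube_to_sphere l t \<noteq> north_pole l"
proof
  assume "cube_to_sphere l t = north_pole l"
  then have "(cube_norm2 l t - 1) / (cube_norm2 l t + 1) = 1"
    by (metis cube_to_sphere_def north_pole_def less_irrefl)
  then show False
    using cube_norm2_nonneg[of l t] by (simp add: divide_eq_1_iff)
qed

lemma one_plus_tan_shift_sq:
  assumes "sin x \<noteq> 0"
  shows "1 + (tan (x - pi / 2))\<^sup>2 = 1 / (sin x)\<^sup>2"
proof -
  have "1 / (sin x)\<^sup>2 = ((sin x)\<^sup>2 + (cos x)\<^sup>2) / (sin x)\<^sup>2"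
    by simp
  also have "\<dots> = 1 + (cos x)\<^sup>2 / (sin x)\<^sup>2"
    using assms by (simp only: add_divide_distrib) simp
  also have "\<dots> = 1 + (- cos x / sin x)\<^sup>2"
    by (simp add: power_divide)
  also have "- cos x / sin x = tan (x - pi / 2)"
    by (simp add: tan_def sin_diff cos_diff)
  finally show ?thesis ..
qed

lemma cube_to_sphere_near_north_pole:
  assumes t: "t \<in> open_cube l" and j: "j < l"
  shows "\<bar>cube_to_sphere l t k - north_pole l k\<bar> \<le> 2 * \<bar>sin (t j)\<bar>"
proof -
  define S where "S = cube_norm2 l t"
  define s where "s = sin (t j)"
  have S0: "0 \<le> S" by (simp add: S_def cube_norm2_nonneg)
  have "0 < t j" "t j < pi" using t j by (auto simp: open_cube_def)
  then have s0: "0 < s" and s1: "s \<le> 1" using sin_gt_zero by (auto simp: s_def)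
  have "(cube_coord t j)\<^sup>2 \<le> S"
    unfolding S_def cube_norm2_def by (rule member_le_sum) (use j in auto)
  moreover have "1 + (cube_coord t j)\<^sup>2 = 1 / s\<^sup>2"
    unfolding cube_coord_def s_def by (rule one_plus_tan_shift_sq) (use s0 s_def in auto)
  ultimately have "1 / s\<^sup>2 \<le> 1 + S"
    by simp
  then have D: "1 / (1 + S) \<le> s\<^sup>2"
    using s0 S0 by (simp add: field_simps)
  have s2: "s\<^sup>2 \<le> s" using s0 s1 by (simp add: power2_eq_square mult_le_cancel_right1)
  consider "k < l" | "k = l" | "l < k" by linarith
  then show ?thesis
  proof cases
    case 1
    have "(cube_coord t k)\<^sup>2 \<le> S"
      unfolding S_def cube_norm2_def by (rule member_le_sum) (use 1 in auto)
    then have "(cube_coord t k / (1 + S))\<^sup>2 \<le> (1 + S) / (1 + S)\<^sup>2"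
      using S0 by (simp add: power_divide divide_right_mono)
    also have "\<dots> = 1 / (1 + S)"
      using S0 by (simp add: power2_eq_square)
    finally have "\<bar>cube_coord t k / (1 + S)\<bar> \<le> \<bar>s\<bar>"
      using D abs_le_square_iff by fastforce
    then show ?thesis
      using 1 s0 by (simp add: cube_to_sphere_def north_pole_def S_def s_def abs_mult)
  next
    case 2
    have "(S - 1) / (S + 1) - 1 = - 2 / (1 + S)"
      using S0 by (simp add: field_simps)
    then have "\<bar>cube_to_sphere l t k - north_pole l k\<bar> = 2 / (1 + S)"
      using 2 S0 by (simp add: cube_to_sphere_def north_pole_def S_def)
    also have "\<dots> \<le> 2 * \<bar>s\<bar>"
      using D s2 s0 by simp
    finally show ?thesis by (simp add: s_def)
  next
    case 3
    then show ?thesis by (simp add: cube_to_sphere_def north_pole_def)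
  qed
qed

lemma inj_on_cube_to_sphere: "inj_on (cube_to_sphere l) (open_cube l)"
proof (rule inj_onI)
  fix t s assume t: "t \<in> open_cube l" and s: "s \<in> open_cube l"
    and eq: "cube_to_sphere l t = cube_to_sphere l s"
  have St: "0 \<le> cube_norm2 l t" and Ss: "0 \<le> cube_norm2 l s"
    by (simp_all add: cube_norm2_nonneg)
  have "(cube_norm2 l t - 1) / (cube_norm2 l t + 1) = (cube_norm2 l s - 1) / (cube_norm2 l s + 1)"
    using fun_cong[OF eq, of l] by (simp add: cube_to_sphere_def)
  then have SS: "cube_norm2 l t = cube_norm2 l s"
    using St Ss by (simp add: frac_eq_eq algebra_simps)
  show "t = s"
  proof
    fix i
    show "t i = s i"
    proof (cases "i < l")
      case True
      then have "2 * cube_coord t i / (1 + cube_norm2 l t) = 2 * cube_coord s i / (1 + cube_norm2 l t)"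
        using fun_cong[OF eq, of i] SS by (simp add: cube_to_sphere_def)
      then have "tan (t i - pi / 2) = tan (s i - pi / 2)"
        using St by (simp add: cube_coord_def divide_cancel_right)
      moreover have "- (pi / 2) < t i - pi / 2" "t i - pi / 2 < pi / 2"
        "- (pi / 2) < s i - pi / 2" "s i - pi / 2 < pi / 2"
        using t s True by (auto simp: open_cube_def)
      ultimately have "t i - pi / 2 = s i - pi / 2"
        by (metis arctan_tan)
      then show ?thesis by simp
    next
      case False
      then show ?thesis using t s by (simp add: open_cube_def)
    qed
  qed
qed

lemma cube_to_sphere_surj:
  assumes x: "x \<in> topspace (nsphere l)" and "x \<noteq> north_pole l"
  shows "x \<in> cube_to_sphere l ` open_cube l"
proof -
  have sum_x: "(\<Sum>k<l. (x k)\<^sup>2) + (x l)\<^sup>2 = 1" and x0: "\<forall>k>l. x k = 0"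
    using x by (simp_all add: topspace_nsphere_iff lessThan_Suc_atMost[symmetric])
  have "x l < 1"
  proof (rule ccontr)
    assume "\<not> x l < 1"
    moreover have "(x l)\<^sup>2 \<le> 1"
      using sum_x sum_nonneg[of "{..<l}" "\<lambda>k. (x k)\<^sup>2"] by simp
    ultimately have "x l = 1"
      using abs_le_square_iff[of "x l" 1] by simp
    then have "\<forall>k\<in>{..<l}. (x k)\<^sup>2 = 0"
      using sum_x by (subst sum_nonneg_eq_0_iff[symmetric]) auto
    then have "x k = north_pole l k" for k
      using x0 \<open>x l = 1\<close> by (cases k l rule: linorder_cases) (auto simp: north_pole_def)
    then have "x = north_pole l" ..
    with \<open>x \<noteq> north_pole l\<close> show False by simp
  qed
  define c where "c = 1 - x l"
  have c0: "0 < c" using \<open>x l < 1\<close> by (simp add: c_def)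
  define t where "t = (\<lambda>i. if i < l then pi / 2 + arctan (x i / c) else 0)"
  have "0 < pi / 2 + arctan y" "pi / 2 + arctan y < pi" for y
    using arctan_bounded[of y] by auto
  then have "t \<in> open_cube l"
    by (simp add: open_cube_def t_def)
  have yc: "cube_coord t i = x i / c" if "i < l" for i
    using that by (simp add: cube_coord_def t_def tan_arctan)
  have "cube_norm2 l t = (1 - (x l)\<^sup>2) / c\<^sup>2"
    using sum_x by (simp add: cube_norm2_def yc power_divide sum_divide_distrib[symmetric])
  also have "1 - (x l)\<^sup>2 = (1 + x l) * c"
    by (simp add: c_def power2_eq_square algebra_simps)
  finally have S: "cube_norm2 l t = (1 + x l) / c"
    using c0 by (simp add: power2_eq_square)
  have "cube_to_sphere l t = x"
  proof
    fix k
    consider "k < l" | "k = l" | "l < k" by linarith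
    then show "cube_to_sphere l t k = x k"
    proof cases
      case 1
      then show ?thesis using c0 by (simp add: cube_to_sphere_def yc S field_simps c_def)
    next
      case 2
      then show ?thesis using c0 by (simp add: cube_to_sphere_def S field_simps c_def)
    qed (use x0 in \<open>simp add: cube_to_sphere_def\<close>)
  qed
  then show ?thesis
    using \<open>t \<in> open_cube l\<close> by blast
qed

lemma tendsto_coord_atin_cube_topology:
  assumes "t0 \<in> cube l"
  shows "((\<lambda>t. t i) \<longlongrightarrow> t0 i) (atin (cube_topology l) t0)"
proof -
  have "continuous_map (cube_topology l) euclideanreal (\<lambda>t. t i)"
    unfolding cube_topology_def
    by (rule continuous_map_from_subtopology[OF continuous_map_product_projection]) simp
  then show ?thesis
    using assms by (simp add: continuous_map_atin limitin_canonical_iff)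
qed

lemma tendsto_cube_to_sphere:
  assumes t0: "t0 \<in> open_cube l" and lim: "\<And>i. ((\<lambda>t. t i) \<longlongrightarrow> t0 i) F"
  shows "((\<lambda>t. cube_to_sphere l t k) \<longlongrightarrow> cube_to_sphere l t0 k) F"
proof -
  have "((\<lambda>t. cube_coord t i) \<longlongrightarrow> cube_coord t0 i) F" if "i < l" for i
  proof -
    have "0 < t0 i" "t0 i < pi" using t0 that by (auto simp: open_cube_def)
    then have "cos (t0 i - pi / 2) \<noteq> 0"
      using sin_gt_zero[of "t0 i"] by (simp add: cos_diff)
    then show ?thesis
      unfolding cube_coord_def by (intro isCont_tendsto_compose[OF isCont_tan] tendsto_intros lim)
  qed
  then have "((\<lambda>t. cube_norm2 l t) \<longlongrightarrow> cube_norm2 l t0) F"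
    unfolding cube_norm2_def by (intro tendsto_sum tendsto_power) auto
  then show ?thesis
    using cube_norm2_nonneg[of l t0] \<open>\<And>i. i < l \<Longrightarrow> _\<close>
    unfolding cube_to_sphere_def by (auto intro!: tendsto_intros)
qed

lemma continuous_map_collapse_cube_to_nsphere:
  "continuous_map (cube_topology l) (nsphere l) (\<lambda>t. cube_sphere_to_nsphere l (collapse l t))"
proof -
  let ?f = "\<lambda>t. cube_sphere_to_nsphere l (collapse l t)"
  have "continuous_map (cube_topology l) euclideanreal (\<lambda>t. ?f t k)" for k
    unfolding continuous_map_atin limitin_canonical_iff
  proof
    fix t0 assume "t0 \<in> topspace (cube_topology l)"
    then have t0: "t0 \<in> cube l" by simp
    let ?F = "atin (cube_topology l) t0"
    have lim: "\<And>i. ((\<lambda>t. t i) \<longlongrightarrow> t0 i) ?F"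
      by (rule tendsto_coord_atin_cube_topology[OF t0])
    have in_cube: "eventually (\<lambda>t. t \<in> cube l) ?F"
      unfolding eventually_atin using openin_topspace[of "cube_topology l"] by auto
    show "((\<lambda>t. ?f t k) \<longlongrightarrow> ?f t0 k) ?F"
    proof (cases "t0 \<in> open_cube l")
      case True
      have "eventually (\<lambda>t. 0 < t i \<and> t i < pi) ?F" if "i < l" for i
      proof -
        have "0 < t0 i" "t0 i < pi" using True that by (auto simp: open_cube_def)
        then show ?thesis
          using order_tendstoD(1)[OF lim[of i], of 0] order_tendstoD(2)[OF lim[of i], of pi]
          by (intro eventually_conj)
      qed
      then have "eventually (\<lambda>t. \<forall>i\<in>{..<l}. 0 < t i \<and> t i < pi) ?F"
        by (intro eventually_ball_finite) auto
      with in_cube have "eventually (\<lambda>t. cube_to_sphere l t k = ?f t k) ?F"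
        by eventually_elim (auto simp: open_cube_def cube_def cube_sphere_to_nsphere_collapse)
      with tendsto_cube_to_sphere[OF True lim] have "((\<lambda>t. ?f t k) \<longlongrightarrow> cube_to_sphere l t0 k) ?F"
        by (rule Lim_transform_eventually)
      then show ?thesis
        using True by (simp add: cube_sphere_to_nsphere_collapse)
    next
      case False
      then obtain j where j: "j < l" "t0 j = 0 \<or> t0 j = pi"
        using t0 by (auto simp: open_cube_def cube_def less_le)
      have "sin (t0 j) = 0"
        using j(2) by auto
      moreover have "((\<lambda>t. 2 * \<bar>sin (t j)\<bar>) \<longlongrightarrow> 2 * \<bar>sin (t0 j)\<bar>) ?F"
        by (intro tendsto_intros lim)
      ultimately have "((\<lambda>t. 2 * \<bar>sin (t j)\<bar>) \<longlongrightarrow> 0) ?F"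
        by (simp only: abs_zero mult_zero_right)
      moreover have "eventually (\<lambda>t. norm (?f t k - north_pole l k) \<le> 2 * \<bar>sin (t j)\<bar>) ?F"
        using in_cube
        by eventually_elim (auto simp: cube_sphere_to_nsphere_collapse cube_to_sphere_near_north_pole j(1))
      ultimately have "((\<lambda>t. ?f t k - north_pole l k) \<longlongrightarrow> 0) ?F"
        by (rule Lim_null_comparison[rotated])
      then show ?thesis
        using False by (simp add: LIM_zero_iff cube_sphere_to_nsphere_collapse)
    qed
  qed
  moreover have "?f t \<in> topspace (nsphere l)" for t
    using cube_to_sphere_in_nsphere north_pole_in_nsphere by (simp add: cube_sphere_to_nsphere_collapse)
  ultimately show ?thesis
    unfolding nsphere continuous_map_in_subtopology
    by (auto simp: continuous_map_componentwise_UNIV topspace_nsphere_iff)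
qed

lemma homeomorphic_map_cube_sphere_to_nsphere:
  assumes "0 < l"
  shows "homeomorphic_map (cube_sphere l) (nsphere l) (cube_sphere_to_nsphere l)"
proof (rule continuous_imp_homeomorphic_map[OF _ compact_space_cube_sphere])
  show "continuous_map (cube_sphere l) (nsphere l) (cube_sphere_to_nsphere l)"
    unfolding cube_sphere_eq
    by (rule continuous_compose_quotient_map[OF quotient_map_quotient_topology])
       (simp add: comp_def continuous_map_collapse_cube_to_nsphere)
  show "Hausdorff_space (nsphere l)"
    unfolding nsphere
    by (intro Hausdorff_space_subtopology) (simp add: Hausdorff_space_product_topology)
  have zero: "(\<lambda>_. 0) \<in> cube l - open_cube l"
    using assms by (auto simp: cube_def open_cube_def)
  show "cube_sphere_to_nsphere l ` topspace (cube_sphere l) = topspace (nsphere l)"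
  proof
    show "cube_sphere_to_nsphere l ` topspace (cube_sphere l) \<subseteq> topspace (nsphere l)"
      using cube_to_sphere_in_nsphere north_pole_in_nsphere
      by (auto simp: topspace_cube_sphere cube_sphere_to_nsphere_collapse)
    show "topspace (nsphere l) \<subseteq> cube_sphere_to_nsphere l ` topspace (cube_sphere l)"
    proof
      fix x assume x: "x \<in> topspace (nsphere l)"
      show "x \<in> cube_sphere_to_nsphere l ` topspace (cube_sphere l)"
      proof (cases "x = north_pole l")
        case True
        then have "x = cube_sphere_to_nsphere l (collapse l (\<lambda>_. 0))"
          using zero by (simp add: cube_sphere_to_nsphere_collapse)
        then show ?thesis
          using zero by (auto simp: topspace_cube_sphere)
      next
        case False
        then obtain t where "t \<in> open_cube l" "x = cube_to_sphere l t"
          using cube_to_sphere_surj[OF x] by auto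
        then show ?thesis
          using open_cube_subset_cube
          by (auto simp: topspace_cube_sphere cube_sphere_to_nsphere_collapse intro!: image_eqI)
      qed
    qed
  qed
  show "inj_on (cube_sphere_to_nsphere l) (topspace (cube_sphere l))"
  proof (rule inj_onI)
    fix z1 z2 assume "z1 \<in> topspace (cube_sphere l)" "z2 \<in> topspace (cube_sphere l)"
      and eq: "cube_sphere_to_nsphere l z1 = cube_sphere_to_nsphere l z2"
    then obtain t1 t2 where t: "t1 \<in> cube l" "z1 = collapse l t1" "t2 \<in> cube l" "z2 = collapse l t2"
      by (auto simp: topspace_cube_sphere)
    show "z1 = z2"
      using eq inj_on_cube_to_sphere[of l] cube_to_sphere_neq_north_pole[of l]
      unfolding t by (auto simp: cube_sphere_to_nsphere_def collapse_def inj_on_def split: if_splits)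
  qed
qed

lemma swap_coords_open_cube:
  "Suc m < l \<Longrightarrow> t \<in> open_cube l \<Longrightarrow> swap_coords m (Suc m) t \<in> open_cube l"
  by (auto simp: open_cube_def swap_coords_apply)

lemma cube_to_sphere_swap_coords:
  assumes m: "Suc m < l"
  shows "cube_to_sphere l (swap_coords m (Suc m) t) = swap_coords m (Suc m) (cube_to_sphere l t)"
proof -
  let ?\<tau> = "Transposition.transpose m (Suc m)"
  have coord: "cube_coord (swap_coords m (Suc m) t) i = cube_coord t (?\<tau> i)" for i
    by (simp add: cube_coord_def swap_coords_def)
  have "bij_betw ?\<tau> {..<l} {..<l}"
    using m by (intro bij_betwI[where g = ?\<tau>]) (auto simp: Transposition.transpose_def)
  then have norm2: "cube_norm2 l (swap_coords m (Suc m) t) = cube_norm2 l t"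
    unfolding cube_norm2_def coord using sum.reindex_bij_betw[of ?\<tau> "{..<l}" "{..<l}" "\<lambda>i. (cube_coord t i)\<^sup>2"]
    by simp
  have "?\<tau> k < l \<longleftrightarrow> k < l" "?\<tau> k = l \<longleftrightarrow> k = l" for k
    using m by (auto simp: Transposition.transpose_def)
  moreover have "swap_coords m (Suc m) x k = x (?\<tau> k)" for x :: "nat \<Rightarrow> real" and k
    by (simp add: swap_coords_def)
  ultimately show ?thesis
    by (intro ext) (simp add: cube_to_sphere_def norm2 coord)
qed

lemma map_degree_cube_sphere_swap_coords:
  assumes m: "Suc m < l"
  shows "map_degree l (cube_sphere l) (map_option (swap_coords m (Suc m))) = -1"
proof -
  let ?h = "cube_sphere_to_nsphere l" and ?\<sigma> = "swap_coords m (Suc m)"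
  obtain k where hk: "homeomorphic_maps (cube_sphere l) (nsphere l) ?h k"
    using homeomorphic_map_cube_sphere_to_nsphere[of l] m by (auto simp: homeomorphic_map_maps)
  then have h: "continuous_map (cube_sphere l) (nsphere l) ?h" and k: "continuous_map (nsphere l) (cube_sphere l) k"
    and kh: "\<And>x. x \<in> topspace (cube_sphere l) \<Longrightarrow> k (?h x) = x"
    and hk': "\<And>y. y \<in> topspace (nsphere l) \<Longrightarrow> ?h (k y) = y"
    by (auto simp: homeomorphic_maps_def)
  have swap: "continuous_map (nsphere l) (nsphere l) ?\<sigma>"
    using m by (intro continuous_map_swap_coords) auto
  have h_swap: "?h (map_option ?\<sigma> z) = ?\<sigma> (?h z)" for z
    using cube_to_sphere_swap_coords[OF m] m
    by (cases z) (auto simp: cube_sphere_to_nsphere_def north_pole_def swap_coords_apply)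
  have swap_topspace: "map_option ?\<sigma> z \<in> topspace (cube_sphere l)" if z: "z \<in> topspace (cube_sphere l)" for z
  proof -
    obtain t where t: "t \<in> cube l" "z = collapse l t"
      using z by (auto simp: topspace_cube_sphere)
    show ?thesis
    proof (cases "t \<in> open_cube l")
      case True
      then have "map_option ?\<sigma> z = collapse l (?\<sigma> t)" "?\<sigma> t \<in> cube l"
        using t swap_coords_open_cube[OF m] open_cube_subset_cube by (auto simp: collapse_def)
      then show ?thesis
        by (simp add: topspace_cube_sphere)
    qed (use t z in \<open>simp add: collapse_def\<close>)
  qed
  have "continuous_map (cube_sphere l) (cube_sphere l) (k \<circ> ?\<sigma> \<circ> ?h)"
    using h swap k by (intro continuous_map_compose)
  moreover have "(k \<circ> ?\<sigma> \<circ> ?h) z = map_option ?\<sigma> z" if "z \<in> topspace (cube_sphere l)" for z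
    using kh[OF swap_topspace[OF that]] h_swap by simp
  ultimately have "continuous_map (cube_sphere l) (cube_sphere l) (map_option ?\<sigma>)"
    by (rule continuous_map_eq)
  then have "map_degree l (cube_sphere l) (map_option ?\<sigma>) = Brouwer_degree2 l (?h \<circ> map_option ?\<sigma> \<circ> k)"
    using map_degree_homeomorphic_conj[OF hk] by (simp add: map_degree_nsphere)
  also have "\<dots> = Brouwer_degree2 l ?\<sigma>"
    using hk' k h_swap by (intro Brouwer_degree2_eq) (simp add: continuous_map_def)
  also have "\<dots> = -1"
    using m by (intro Brouwer_degree2_swap_coords) simp
  finally show ?thesis .
qed

section \<open>The transition map of a commutation\<close>

lemma transition_None: "transition n u v None = None"
  by (simp add: transition_def)

lemma transition_Some:
  assumes "inj_on (Phi n v) (open_cube (length v))" "s \<in> open_cube (length v)" "Phi n v s = Phi n u t"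
  shows "transition n u v (Some t) = Some s"
  using assms by (auto simp: transition_def inj_on_def intro!: the_equality)

theorem lemma4p5:
  fixes n :: nat and w :: "nat \<Rightarrow> nat" and u uc :: "nat list"
  assumes "w permutes {1..n}"
    and "reduced_word n w u"
    and "reduced_word n w uc"
    and "one_commutation u uc"
  shows "map_degree (perm_length n w) (cube_sphere (perm_length n w)) (transition n u uc) = -1"
proof -
  obtain p q a b where ab: "2 \<le> \<bar>int a - int b\<bar>" "u = p @ [a, b] @ q" "uc = p @ [b, a] @ q"
    using assms(4) by (auto simp: one_commutation_def)
  define l m where "l = perm_length n w" and "m = length p"
  let ?\<sigma> = "swap_coords m (Suc m)"
  have u: "is_word n u" and uc: "reduced_word n (word_perm uc) uc" "length uc = l"
    using assms(2,3) by (auto simp: reduced_word_def l_def)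
  have m: "Suc m < l"
    using uc(2) ab(3) by (simp add: m_def)
  have "Phi n u t = Phi n uc (?\<sigma> t)" for t
    using rot_prod_commutation[of n p a b q t] u ab by (simp add: m_def Phi_eq_flag_of_rot_prod flag_of_cong)
  then have "transition n u uc z = map_option ?\<sigma> z" if "z \<in> topspace (cube_sphere l)" for z
    using that Phi_inj_on_open_cube[OF uc(1)] swap_coords_open_cube[OF m] uc(2)
    by (auto simp: topspace_cube_sphere collapse_def transition_None transition_Some)
  then show ?thesis
    using map_degree_cong map_degree_cube_sphere_swap_coords[OF m] by (metis l_def)
qed

end
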